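(* Let $g_c:[0,\infty)\to[0,\infty)$ be a measurable function with $0<K:=\int_0^\infty g_c(u)\,\mathrm{d}u<\infty$, let $\mu_1,\mu_2\in\mathbb{R}$, $\sigma>0$, $\rho\in(-1,1)$, $\boldsymbol{\mu}=(\mu_1,\mu_2)^\top$ and $\boldsymbol{\Sigma}=\begin{pmatrix}\sigma^2&\rho\sigma\\ \rho\sigma&1\end{pmatrix}$. Suppose $(Y^*,U^* )^\top$ has PDF $$f(\boldsymbol{y})=\frac{1}{|\boldsymbol{\Sigma}|^{1/2}\,\pi K}\,g_c\big((\boldsymbol{y}-\boldsymbol{\mu})^\top\boldsymbol{\Sigma}^{-1}(\boldsymbol{y}-\boldsymbol{\mu})\big),\qquad \boldsymbol{y}\in\mathbb{R}^2.$$ Let $V_1,V_2,R,D$ be mutually independent random variables with $\mathbb{P}(V_k=-1)=\mathbb{P}(V_k=1)=1/2$ for $k=1,2$, $D$ having PDF $\frac{2}{\pi\sqrt{1-d^2}}$ on $(0,1)$ and $R$ having PDF $\frac{2r g_c(r^2)}{K}$ on $(0,\infty)$; put $Z_1=RDV_1$, $Z_2=R\sqrt{1-D^2}V_2$, let $f_{Z_1}$ be the PDF of $Z_1$ and $f_{Z_2\mid Z_1}(w\mid z)=f_{Z_1,Z_2}(z,w)/f_{Z_1}(z)$ the conditional PDF of $Z_2$ given $Z_1=z$. Define $$H(x)=\int_{-x}^{\infty} f_{\rho Z_1+\sqrt{1-\rho^2}\,Z_2}(u)\,\mathrm{d}u,$$ and, for $y\in\mathbb{R}$ with $c_y:=(y-\mu_1)/\sigma$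 satisfying $f_{Z_1}(c_y)>0$, $$G_y(x)=\int_{-\infty}^{x} f_{Z_2\mid Z_1}(w\mid c_y)\,\mathrm{d}w .$$ Then $\mathbb{P}(U^*>0)=H(\mu_2)$, and (when this probability is positive) the PDF of $Y^*$ conditional on $U^*>0$ is $$f_{Y^*\mid U^*>0}(y)=\frac{1}{\sigma}\,f_{Z_1}\!\Big(\frac{y-\mu_1}{\sigma}\Big)\,\frac{G_y\Big(\frac{\mu_2}{\sqrt{1-\rho^2}}+\frac{\rho}{\sqrt{1-\rho^2}}\,\frac{y-\mu_1}{\sigma}\Big)}{H(\mu_2)},$$ with the right-hand side interpreted as $0$ when $f_{Z_1}((y-\mu_1)/\sigma)=0$.
   Context: $f_X$ denotes the PDF of a random variable $X$. The distribution of $(Y^*,U^* )^\top$ above is the bivariate symmetric distribution with location $\boldsymbol{\mu}$, scale matrix $\boldsymbol{\Sigma}$ and density generator $g_c$; note $|\boldsymbol{\Sigma}|=\sigma^2(1-\rho^2)$. *)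

theory Defs
  imports "HOL-Probability.Probability"
begin

text \<open>Quadratic form (y-mu)^T Sigma^{-1} (y-mu) for
  Sigma = [[sigma^2, rho*sigma],[rho*sigma, 1]], written out explicitly:
  Sigma^{-1} = 1/(sigma^2(1-rho^2)) [[1, -rho*sigma],[-rho*sigma, sigma^2]].\<close>
definition quadform :: "real \<Rightarrow> real \<Rightarrow> real \<Rightarrow> real \<Rightarrow> real \<Rightarrow> real \<Rightarrow> real" where
  "quadform mu1 mu2 \<sigma> \<rho> y u =
     ((y - mu1)^2 - 2 * \<rho> * \<sigma> * (y - mu1) * (u - mu2) + \<sigma>^2 * (u - mu2)^2)
       / (\<sigma>^2 * (1 - \<rho>^2))"

text \<open>Bivariate symmetric density with generator g, normalising constant K,
  location (mu1,mu2) and scale matrix Sigma; |Sigma| = sigma^2 (1 - rho^2).\<close>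
definition biv_sym_density ::
  "(real \<Rightarrow> real) \<Rightarrow> real \<Rightarrow> real \<Rightarrow> real \<Rightarrow> real \<Rightarrow> real \<Rightarrow> real \<Rightarrow> real \<Rightarrow> real" where
  "biv_sym_density g K mu1 mu2 \<sigma> \<rho> y u =
     1 / (sqrt (\<sigma>^2 * (1 - \<rho>^2)) * pi * K) * g (quadform mu1 mu2 \<sigma> \<rho> y u)"

definition Hfun :: "(real \<Rightarrow> real) \<Rightarrow> real \<Rightarrow> real" where
  "Hfun fS x = (LINT u:{-x<..}|lborel. fS u)"

definition Gfun :: "(real \<Rightarrow> real \<Rightarrow> real) \<Rightarrow> (real \<Rightarrow> real) \<Rightarrow> real \<Rightarrow> real \<Rightarrow> real" where
  "Gfun fZ12 fZ1 c x = (LINT w:{..x}|lborel. fZ12 c w / fZ1 c)"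

end

theory Submission
  imports Defs
begin

text \<open>
  \<open>(Z\<^sub>1, Z\<^sub>2) = (R D V\<^sub>1, R sqrt (1 - D\<^sup>2) V\<^sub>2)\<close> is a polar-coordinates description of the
  spherical law with density \<open>g (x\<^sup>2 + y\<^sup>2) / (\<pi> K)\<close>: writing \<open>D = sin \<Theta>\<close> makes \<open>\<Theta>\<close> uniform on
  \<open>(0, \<pi>/2)\<close>, \<open>R\<close> carries the radial factor \<open>2 r g (r\<^sup>2) / K\<close>, and the independent signs spread
  the quarter plane over the whole plane. The shear \<open>(x, z) \<mapsto> (\<mu>\<^sub>1 + \<sigma> x, \<mu>\<^sub>2 + \<rho> x + sqrt (1 - \<rho>\<^sup>2) z)\<close>
  has Jacobian \<open>\<sigma> sqrt (1 - \<rho>\<^sup>2) = sqrt |\<Sigma>|\<close> and turns \<open>x\<^sup>2 + z\<^sup>2\<close> into the quadratic form, so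
  \<open>(Y\<^sup>*, U\<^sup>*)\<close> has the law of \<open>(\<mu>\<^sub>1 + \<sigma> Z\<^sub>1, \<mu>\<^sub>2 + \<rho> Z\<^sub>1 + sqrt (1 - \<rho>\<^sup>2) Z\<^sub>2)\<close>. Since \<open>(Z\<^sub>1, Z\<^sub>2)\<close> and \<open>(Z\<^sub>1, -Z\<^sub>2)\<close> have the same law,
  \<open>P(Y\<^sup>* \<in> B, U\<^sup>* > 0)\<close> is the integral over \<open>\<mu>\<^sub>1 + \<sigma> z \<in> B\<close> of the joint density of
  \<open>(Z\<^sub>1, Z\<^sub>2)\<close> over \<open>w \<le> (\<mu>\<^sub>2 + \<rho> z) / sqrt (1 - \<rho>\<^sup>2)\<close>, which is \<open>f\<^sub>Z\<^sub>1(z) G(\<dots>)\<close>; the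
  substitution \<open>y = \<mu>\<^sub>1 + \<sigma> z\<close> yields the conditional density.
\<close>

lemma nn_integral_arcsine_density:
  fixes \<psi> :: "real \<Rightarrow> real \<Rightarrow> ennreal"
  assumes [measurable]: "case_prod \<psi> \<in> borel_measurable (lborel \<Otimes>\<^sub>M lborel)"
  shows "(\<integral>\<^sup>+d. ennreal (indicator {0<..<1} d * (2 / (pi * sqrt (1 - d\<^sup>2)))) * \<psi> d (sqrt (1 - d\<^sup>2)) \<partial>lborel)
       = (\<integral>\<^sup>+\<theta>. ennreal (2 / pi) * \<psi> (sin \<theta>) (cos \<theta>) * indicator {0<..<pi/2} \<theta> \<partial>lborel)"
proof -
  let ?f = "\<lambda>d. ennreal (indicator {0<..<1} d * (2 / (pi * sqrt (1 - d\<^sup>2)))) * \<psi> d (sqrt (1 - d\<^sup>2))"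
  have "(\<integral>\<^sup>+d. ?f d * indicator {sin 0..sin (pi/2)} d \<partial>lborel)
      = (\<integral>\<^sup>+\<theta>. ?f (sin \<theta>) * ennreal (cos \<theta>) * indicator {0..pi/2} \<theta> \<partial>lborel)"
    by (rule nn_integral_substitution_aux)
       (auto intro!: derivative_eq_intros continuous_intros simp: cos_ge_zero)
  also have "(\<integral>\<^sup>+d. ?f d * indicator {sin 0..sin (pi/2)} d \<partial>lborel) = (\<integral>\<^sup>+d. ?f d \<partial>lborel)"
    by (intro nn_integral_cong) (auto split: split_indicator)
  also have "(\<integral>\<^sup>+\<theta>. ?f (sin \<theta>) * ennreal (cos \<theta>) * indicator {0..pi/2} \<theta> \<partial>lborel)
      = (\<integral>\<^sup>+\<theta>. ennreal (2 / pi) * \<psi> (sin \<theta>) (cos \<theta>) * indicator {0<..<pi/2} \<theta> \<partial>lborel)"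
  proof (intro nn_integral_cong)
    fix \<theta> :: real
    show "?f (sin \<theta>) * ennreal (cos \<theta>) * indicator {0..pi/2} \<theta>
        = ennreal (2 / pi) * \<psi> (sin \<theta>) (cos \<theta>) * indicator {0<..<pi/2} \<theta>"
    proof (cases "0 < \<theta> \<and> \<theta> < pi/2")
      case True
      then have "0 < sin \<theta>" "0 < cos \<theta>"
        by (auto intro!: sin_gt_zero cos_gt_zero)
      moreover have "sin \<theta> < 1"
        using \<open>0 < cos \<theta>\<close> sin_cos_squared_add[of \<theta>] sin_le_one[of \<theta>]
        by (cases "sin \<theta> = 1") (auto simp: order_le_less)
      moreover have "sqrt (1 - (sin \<theta>)\<^sup>2) = cos \<theta>"
        using \<open>0 < cos \<theta>\<close> by (simp add: cos_squared_eq[symmetric])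
      moreover have "ennreal (2 / (pi * cos \<theta>)) * ennreal (cos \<theta>) = ennreal (2 / pi)"
        using \<open>0 < cos \<theta>\<close> by (simp add: ennreal_mult[symmetric])
      then have "\<psi> (sin \<theta>) (cos \<theta>) * ennreal (2 / (pi * cos \<theta>)) * ennreal (cos \<theta>)
          = \<psi> (sin \<theta>) (cos \<theta>) * ennreal (2 / pi)"
        by (simp only: mult.assoc)
      ultimately show ?thesis
        using True by (simp add: mult_ac)
    next
      case False
      then consider "\<theta> \<notin> {0..pi/2}" | "\<theta> = 0" | "\<theta> = pi/2"
        by fastforce
      then show ?thesis
      proof cases
        case 1
        then have "\<theta> \<notin> {0<..<pi/2}"
          by auto
        with 1 show ?thesis
          by simp
      next
        case 3
        then show ?thesis
          unfolding 3 by simp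
      qed simp
    qed
  qed
  finally show ?thesis .
qed

lemma nn_integral_substitution_ray:
  fixes f :: "real \<Rightarrow> ennreal" and g g' :: "real \<Rightarrow> real"
  assumes [measurable]: "f \<in> borel_measurable borel"
    and deriv: "\<And>x. (g has_real_derivative g' x) (at x)" and cont: "continuous_on UNIV g'"
    and nonneg: "\<And>x. a \<le> x \<Longrightarrow> 0 \<le> g' x"
    and lim: "(g \<longlongrightarrow> b) at_top" and below: "\<And>x. a \<le> x \<Longrightarrow> g x < b"
  shows "(\<integral>\<^sup>+x. f x * indicator {g a..<b} x \<partial>lborel)
       = (\<integral>\<^sup>+x. f (g x) * ennreal (g' x) * indicator {a..} x \<partial>lborel)"
proof -
  let ?I = "\<lambda>n::nat. {a..a + 1 + real n}"
  have mono: "g x \<le> g y" if "a \<le> x" "x \<le> y" for x y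
    by (rule deriv_nonneg_imp_mono[of x y g g']) (use that deriv nonneg in auto)
  have [measurable]: "g \<in> borel_measurable borel" "g' \<in> borel_measurable borel"
    using DERIV_continuous_on[OF deriv] cont by (auto intro: borel_measurable_continuous_onI)
  have image: "(\<Union>n. {g a..g (a + 1 + real n)}) = {g a..<b}"
  proof (intro equalityI subsetI)
    fix y assume "y \<in> {g a..<b}"
    then have "eventually (\<lambda>x. y < g x) at_top"
      using lim by (auto intro: order_tendstoD)
    then obtain x0 where "\<And>x. x \<ge> x0 \<Longrightarrow> y < g x"
      by (auto simp: eventually_at_top_linorder)
    moreover obtain n :: nat where "max a x0 - a \<le> real n"
      using real_arch_simple by blast
    ultimately show "y \<in> (\<Union>n. {g a..g (a + 1 + real n)})"
      using \<open>y \<in> {g a..<b}\<close> by (intro UN_I[of n]) (auto intro!: less_imp_le)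
  qed (use below[of "a + 1 + real _"] in \<open>force intro: le_less_trans\<close>)
  have "(\<Union>n. ?I n) = {a..}"
  proof (intro equalityI subsetI)
    fix x assume "x \<in> {a..}"
    moreover obtain n :: nat where "x - a \<le> real n"
      using real_arch_simple by blast
    ultimately show "x \<in> (\<Union>n. ?I n)" by (intro UN_I[of n]) auto
  qed auto
  then have "(\<integral>\<^sup>+x. f (g x) * ennreal (g' x) * indicator {a..} x \<partial>lborel)
      = emeasure (density lborel (\<lambda>x. f (g x) * ennreal (g' x))) (\<Union>n. ?I n)"
    by (simp add: emeasure_density)
  also have "\<dots> = (SUP n. emeasure (density lborel (\<lambda>x. f (g x) * ennreal (g' x))) (?I n))"
    by (rule SUP_emeasure_incseq[symmetric]) (auto simp: incseq_def)
  also have "\<dots> = (SUP n. emeasure (density lborel f) {g a..g (a + 1 + real n)})"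
  proof (intro SUP_cong refl)
    fix n :: nat
    show "emeasure (density lborel (\<lambda>x. f (g x) * ennreal (g' x))) (?I n)
        = emeasure (density lborel f) {g a..g (a + 1 + real n)}"
      using nn_integral_substitution_aux[of f a "a + 1 + real n" g g'] deriv nonneg
      by (simp add: emeasure_density continuous_on_subset[OF cont])
  qed
  also have "\<dots> = emeasure (density lborel f) (\<Union>n. {g a..g (a + 1 + real n)})"
    by (rule SUP_emeasure_incseq) (auto simp: incseq_def intro!: mono)
  also have "\<dots> = (\<integral>\<^sup>+x. f x * indicator {g a..<b} x \<partial>lborel)"
    unfolding image by (simp add: emeasure_density)
  finally show ?thesis ..
qed

lemma nn_integral_lborel_split_sign:
  fixes h :: "real \<Rightarrow> ennreal"
  assumes [measurable]: "h \<in> borel_measurable borel"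
  shows "(\<integral>\<^sup>+x. h x \<partial>lborel) = (\<integral>\<^sup>+x. (h x + h (- x)) * indicator {0<..} x \<partial>lborel)"
proof -
  have "(\<integral>\<^sup>+x. h x \<partial>lborel)
      = (\<integral>\<^sup>+x. h x * indicator {0<..} x + h x * indicator {..<0} x \<partial>lborel)"
    using AE_lborel_singleton[of 0] by (intro nn_integral_cong_AE) (auto split: split_indicator)
  also have "\<dots> = (\<integral>\<^sup>+x. h x * indicator {0<..} x \<partial>lborel) + (\<integral>\<^sup>+x. h x * indicator {..<0} x \<partial>lborel)"
    by (rule nn_integral_add) auto
  also have "(\<integral>\<^sup>+x. h x * indicator {..<0} x \<partial>lborel) = (\<integral>\<^sup>+x. h (- x) * indicator {0<..} x \<partial>lborel)"
    using nn_integral_real_affine[of "\<lambda>x. h x * indicator {..<0} x" "-1" 0]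
    by (auto simp: indicator_def)
  finally show ?thesis
    by (simp add: nn_integral_add[symmetric] distrib_right)
qed

lemma nn_integral_lborel_pair_quadrants:
  fixes F :: "real \<Rightarrow> real \<Rightarrow> ennreal"
  assumes [measurable]: "case_prod F \<in> borel_measurable (lborel \<Otimes>\<^sub>M lborel)"
  defines "Q a b \<equiv> \<integral>\<^sup>+x. \<integral>\<^sup>+y. F (a * x) (b * y) * indicator {0<..} x * indicator {0<..} y \<partial>lborel \<partial>lborel"
  shows "(\<integral>\<^sup>+x. \<integral>\<^sup>+y. F x y \<partial>lborel \<partial>lborel) = Q 1 1 + Q 1 (-1) + Q (-1) 1 + Q (-1) (-1)"
proof -
  define h where "h x = (\<integral>\<^sup>+y. (F x y + F x (- y)) * indicator {0<..} y \<partial>lborel)" for x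
  have [measurable]: "h \<in> borel_measurable borel"
    unfolding h_def by measurable
  have "(\<integral>\<^sup>+x. \<integral>\<^sup>+y. F x y \<partial>lborel \<partial>lborel) = (\<integral>\<^sup>+x. h x \<partial>lborel)"
    unfolding h_def by (intro nn_integral_cong nn_integral_lborel_split_sign) measurable
  also have "\<dots> = (\<integral>\<^sup>+x. (h x + h (- x)) * indicator {0<..} x \<partial>lborel)"
    by (rule nn_integral_lborel_split_sign) measurable
  also have "\<dots> = (\<integral>\<^sup>+x. \<integral>\<^sup>+y. (F x y + F x (- y) + F (- x) y + F (- x) (- y))
            * indicator {0<..} x * indicator {0<..} y \<partial>lborel \<partial>lborel)"
    unfolding h_def
    by (intro nn_integral_cong)
       (simp add: nn_integral_add[symmetric] nn_integral_multc[symmetric]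
          nn_integral_cmult[symmetric] algebra_simps)
  also have "\<dots> = Q 1 1 + Q 1 (-1) + Q (-1) 1 + Q (-1) (-1)"
    unfolding Q_def by (simp add: nn_integral_add distrib_right)
  finally show ?thesis .
qed

lemma nn_integral_radial_scale:
  fixes G :: "real \<Rightarrow> ennreal"
  assumes [measurable]: "G \<in> borel_measurable borel" and "0 < c"
  shows "(\<integral>\<^sup>+r. G (c * r) * ennreal r * indicator {0<..} r \<partial>lborel)
       = (\<integral>\<^sup>+y. G y * ennreal (y / c\<^sup>2) * indicator {0<..} y \<partial>lborel)"
proof -
  have "(\<integral>\<^sup>+y. G y * ennreal (y / c\<^sup>2) * indicator {0<..} y \<partial>lborel)
      = ennreal c * (\<integral>\<^sup>+r. G (c * r) * ennreal (c * r / c\<^sup>2) * indicator {0<..} (c * r) \<partial>lborel)"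
    using nn_integral_real_affine[of "\<lambda>y. G y * ennreal (y / c\<^sup>2) * indicator {0<..} y" c 0] \<open>0 < c\<close>
    by simp
  also have "\<dots> = (\<integral>\<^sup>+r. ennreal c * (G (c * r) * ennreal (c * r / c\<^sup>2) * indicator {0<..} (c * r)) \<partial>lborel)"
    by (rule nn_integral_cmult[symmetric]) measurable
  also have "\<dots> = (\<integral>\<^sup>+r. G (c * r) * ennreal r * indicator {0<..} r \<partial>lborel)"
  proof (intro nn_integral_cong)
    fix r :: real
    show "ennreal c * (G (c * r) * ennreal (c * r / c\<^sup>2) * indicator {0<..} (c * r))
        = G (c * r) * ennreal r * indicator {0<..} r"
    proof (cases "0 < r")
      case True
      have "ennreal c * ennreal (c * r / c\<^sup>2) = ennreal r"
        using \<open>0 < c\<close> True by (simp add: ennreal_mult[symmetric] power2_eq_square)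
      moreover have "ennreal c * (G (c * r) * ennreal (c * r / c\<^sup>2) * indicator {0<..} (c * r))
          = G (c * r) * (ennreal c * ennreal (c * r / c\<^sup>2)) * indicator {0<..} (c * r)"
        by (simp only: mult_ac)
      ultimately show ?thesis
        using \<open>0 < c\<close> True by simp
    qed (use \<open>0 < c\<close> in \<open>simp add: zero_less_mult_iff\<close>)
  qed
  finally show ?thesis ..
qed

lemma nn_integral_arctan_substitution:
  fixes H :: "real \<Rightarrow> ennreal"
  assumes [measurable]: "H \<in> borel_measurable borel" and "0 < y"
  shows "(\<integral>\<^sup>+\<theta>. H \<theta> * ennreal (y / (cos \<theta>)\<^sup>2) * indicator {0<..<pi/2} \<theta> \<partial>lborel)
       = (\<integral>\<^sup>+x. H (arctan (x / y)) * indicator {0<..} x \<partial>lborel)"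
proof -
  let ?f = "\<lambda>\<theta>. H \<theta> * ennreal (y / (cos \<theta>)\<^sup>2) * indicator {0<..<pi/2} \<theta>"
  have "(\<integral>\<^sup>+\<theta>. ?f \<theta> * indicator {arctan (0 / y)..<pi/2} \<theta> \<partial>lborel)
      = (\<integral>\<^sup>+x. ?f (arctan (x / y)) * ennreal (y / (x\<^sup>2 + y\<^sup>2)) * indicator {0..} x \<partial>lborel)"
  proof (rule nn_integral_substitution_ray)
    show "((\<lambda>x. arctan (x / y)) has_real_derivative y / (x\<^sup>2 + y\<^sup>2)) (at x)" for x
      using \<open>0 < y\<close> by (auto intro!: derivative_eq_intros simp: field_simps power2_eq_square)
    show "continuous_on UNIV (\<lambda>x. y / (x\<^sup>2 + y\<^sup>2))"
      using \<open>0 < y\<close> by (intro continuous_intros) (auto simp: add_nonneg_pos)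
    show "((\<lambda>x. arctan (x / y)) \<longlongrightarrow> pi/2) at_top"
      using \<open>0 < y\<close> filterlim_at_top_mult_tendsto_pos[OF tendsto_const[of "1 / y"] _ filterlim_ident]
      by (intro filterlim_compose[OF tendsto_arctan_at_top]) simp
  qed (use \<open>0 < y\<close> arctan_ubound in auto)
  also have "(\<integral>\<^sup>+\<theta>. ?f \<theta> * indicator {arctan (0 / y)..<pi/2} \<theta> \<partial>lborel) = (\<integral>\<^sup>+\<theta>. ?f \<theta> \<partial>lborel)"
    by (intro nn_integral_cong) (auto split: split_indicator)
  also have "(\<integral>\<^sup>+x. ?f (arctan (x / y)) * ennreal (y / (x\<^sup>2 + y\<^sup>2)) * indicator {0..} x \<partial>lborel)
      = (\<integral>\<^sup>+x. H (arctan (x / y)) * indicator {0<..} x \<partial>lborel)"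
  proof (intro nn_integral_cong)
    fix x :: real
    show "?f (arctan (x / y)) * ennreal (y / (x\<^sup>2 + y\<^sup>2)) * indicator {0..} x
        = H (arctan (x / y)) * indicator {0<..} x"
    proof (cases "0 < x")
      case True
      have "(cos (arctan (x / y)))\<^sup>2 = y\<^sup>2 / (x\<^sup>2 + y\<^sup>2)"
        using \<open>0 < y\<close> by (simp add: cos_arctan power_divide field_simps)
      moreover have "0 < x\<^sup>2 + y\<^sup>2"
        using True by (simp add: add_pos_nonneg)
      ultimately have "ennreal (y / (cos (arctan (x / y)))\<^sup>2) * ennreal (y / (x\<^sup>2 + y\<^sup>2)) = 1"
        using \<open>0 < y\<close> by (simp add: ennreal_mult[symmetric] power2_eq_square)
      then show ?thesis
        using True \<open>0 < y\<close> arctan_ubound[of "x / y"] by (simp add: mult_ac)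
    qed (cases "x = 0"; simp)
  qed
  finally show ?thesis .
qed

lemma nn_integral_polar_quadrant:
  fixes F :: "real \<Rightarrow> real \<Rightarrow> ennreal"
  assumes [measurable]: "case_prod F \<in> borel_measurable (lborel \<Otimes>\<^sub>M lborel)"
  shows "(\<integral>\<^sup>+r. \<integral>\<^sup>+\<theta>. F (r * sin \<theta>) (r * cos \<theta>) * ennreal r
            * indicator {0<..} r * indicator {0<..<pi/2} \<theta> \<partial>lborel \<partial>lborel)
       = (\<integral>\<^sup>+x. \<integral>\<^sup>+y. F x y * indicator {0<..} x * indicator {0<..} y \<partial>lborel \<partial>lborel)"
proof -
  define P where "P \<theta> y = F (y * (sin \<theta> / cos \<theta>)) y * ennreal (y / (cos \<theta>)\<^sup>2)
      * indicator {0<..} y * indicator {0<..<pi/2} \<theta>" for \<theta> y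
  have [measurable]: "case_prod P \<in> borel_measurable (lborel \<Otimes>\<^sub>M lborel)"
    unfolding P_def by measurable
  have radial: "(\<integral>\<^sup>+r. F (r * sin \<theta>) (r * cos \<theta>) * ennreal r
      * indicator {0<..} r * indicator {0<..<pi/2} \<theta> \<partial>lborel) = (\<integral>\<^sup>+y. P \<theta> y \<partial>lborel)" for \<theta>
  proof (cases "0 < \<theta> \<and> \<theta> < pi/2")
    case True
    then have "0 < cos \<theta>"
      by (intro cos_gt_zero) auto
    then show ?thesis
      using True nn_integral_radial_scale[of "\<lambda>y. F (y * (sin \<theta> / cos \<theta>)) y" "cos \<theta>"]
      by (simp add: P_def mult_ac)
  qed (simp add: P_def)
  have angular: "(\<integral>\<^sup>+\<theta>. P \<theta> y \<partial>lborel)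
      = (\<integral>\<^sup>+x. F x y * indicator {0<..} x * indicator {0<..} y \<partial>lborel)" for y
  proof (cases "0 < y")
    case True
    have "y * (sin (arctan (x / y)) / cos (arctan (x / y))) = x" for x
      using True tan_arctan[of "x / y"] by (simp add: tan_def)
    with True show ?thesis
      using nn_integral_arctan_substitution[of "\<lambda>\<theta>. F (y * (sin \<theta> / cos \<theta>)) y" y]
      by (simp add: P_def mult_ac)
  qed (simp add: P_def)
  have "(\<integral>\<^sup>+r. \<integral>\<^sup>+\<theta>. F (r * sin \<theta>) (r * cos \<theta>) * ennreal r
            * indicator {0<..} r * indicator {0<..<pi/2} \<theta> \<partial>lborel \<partial>lborel)
      = (\<integral>\<^sup>+\<theta>. \<integral>\<^sup>+y. P \<theta> y \<partial>lborel \<partial>lborel)"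
    by (subst lborel_pair.Fubini'[symmetric]) (measurable, simp add: radial)
  also have "\<dots> = (\<integral>\<^sup>+y. \<integral>\<^sup>+x. F x y * indicator {0<..} x * indicator {0<..} y \<partial>lborel \<partial>lborel)"
    by (subst lborel_pair.Fubini') (measurable, simp add: angular)
  also have "\<dots> = (\<integral>\<^sup>+x. \<integral>\<^sup>+y. F x y * indicator {0<..} x * indicator {0<..} y \<partial>lborel \<partial>lborel)"
    by (rule lborel_pair.Fubini') measurable
  finally show ?thesis .
qed

lemma nn_integral_lborel_pair_shear:
  fixes f :: "real \<Rightarrow> real \<Rightarrow> ennreal" and a b c m1 m2 :: real
  assumes [measurable]: "case_prod f \<in> borel_measurable (lborel \<Otimes>\<^sub>M lborel)"
    and "0 < a" "0 < b"
  shows "(\<integral>\<^sup>+y. \<integral>\<^sup>+u. f y u \<partial>lborel \<partial>lborel)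
       = (\<integral>\<^sup>+x. \<integral>\<^sup>+z. ennreal (a * b) * f (m1 + a * x) (m2 + c * x + b * z) \<partial>lborel \<partial>lborel)"
proof -
  have "(\<integral>\<^sup>+y. \<integral>\<^sup>+u. f y u \<partial>lborel \<partial>lborel)
      = ennreal a * (\<integral>\<^sup>+x. \<integral>\<^sup>+u. f (m1 + a * x) u \<partial>lborel \<partial>lborel)"
    using \<open>0 < a\<close> nn_integral_real_affine[of "\<lambda>y. \<integral>\<^sup>+u. f y u \<partial>lborel" a m1] by simp
  also have "\<dots> = ennreal a * (\<integral>\<^sup>+x. ennreal b * \<integral>\<^sup>+z. f (m1 + a * x) (m2 + c * x + b * z) \<partial>lborel \<partial>lborel)"
    using \<open>0 < b\<close> nn_integral_real_affine[of "f (m1 + a * _)" b "m2 + c * _"]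
    by (simp cong: nn_integral_cong)
  finally show ?thesis
    using assms by (simp add: nn_integral_cmult ennreal_mult mult.assoc)
qed

lemma distributedI_nn_integral:
  assumes [measurable]: "X \<in> measurable M N" "f \<in> borel_measurable N"
    and law: "\<And>A. A \<in> sets N \<Longrightarrow>
      (\<integral>\<^sup>+\<omega>. indicator A (X \<omega>) \<partial>M) = (\<integral>\<^sup>+x. f x * indicator A x \<partial>N)"
  shows "distributed M N X f"
proof -
  have "distr M N X = density N f"
  proof (rule measure_eqI)
    fix A assume "A \<in> sets (distr M N X)"
    then have [measurable]: "A \<in> sets N" by simp
    have "emeasure (distr M N X) A = (\<integral>\<^sup>+x. indicator A x \<partial>distr M N X)"
      by simp
    also have "\<dots> = (\<integral>\<^sup>+\<omega>. indicator A (X \<omega>) \<partial>M)"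
      by (rule nn_integral_distr) measurable
    finally show "emeasure (distr M N X) A = emeasure (density N f) A"
      by (simp add: law emeasure_density)
  qed simp
  then show ?thesis
    by (simp add: distributed_def)
qed

lemma distributed_compose_density:
  assumes X: "distributed M N X f" and [measurable]: "T \<in> measurable N N'" "h \<in> borel_measurable N'"
    and change: "\<And>A. A \<in> sets N' \<Longrightarrow>
      (\<integral>\<^sup>+p. f p * indicator A (T p) \<partial>N) = (\<integral>\<^sup>+q. h q * indicator A q \<partial>N')"
  shows "distributed M N' (\<lambda>\<omega>. T (X \<omega>)) h"
proof (rule distributedI_nn_integral)
  have [measurable]: "X \<in> measurable M N" "f \<in> borel_measurable N"
    using X by (auto simp: distributed_def)
  show "(\<lambda>\<omega>. T (X \<omega>)) \<in> measurable M N'" "h \<in> borel_measurable N'"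
    by measurable
  fix A assume [measurable]: "A \<in> sets N'"
  have "(\<integral>\<^sup>+\<omega>. indicator A (T (X \<omega>)) \<partial>M) = (\<integral>\<^sup>+p. f p * indicator A (T p) \<partial>N)"
    by (rule distributed_nn_integral[OF X, symmetric]) measurable
  then show "(\<integral>\<^sup>+\<omega>. indicator A (T (X \<omega>)) \<partial>M) = (\<integral>\<^sup>+q. h q * indicator A q \<partial>N')"
    by (simp add: change)
qed

lemma distributed_reflect_snd:
  fixes f :: "real \<Rightarrow> real \<Rightarrow> ennreal"
  assumes Z: "distributed M (lborel \<Otimes>\<^sub>M lborel) (\<lambda>\<omega>. (X \<omega>, Y \<omega>)) (case_prod f)"
    and even: "\<And>x y. f x (- y) = f x y"
  shows "distributed M (lborel \<Otimes>\<^sub>M lborel) (\<lambda>\<omega>. (X \<omega>, - Y \<omega>)) (case_prod f)"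
proof -
  have [measurable]: "case_prod f \<in> borel_measurable (lborel \<Otimes>\<^sub>M lborel)"
    using Z by (simp add: distributed_def)
  have "distributed M (lborel \<Otimes>\<^sub>M lborel) (\<lambda>\<omega>. (\<lambda>(x, y). (x, - y)) (X \<omega>, Y \<omega>)) (case_prod f)"
  proof (rule distributed_compose_density[OF Z])
    fix A :: "(real \<times> real) set" assume [measurable]: "A \<in> sets (lborel \<Otimes>\<^sub>M lborel)"
    have "(\<integral>\<^sup>+p. case_prod f p * indicator A ((\<lambda>(x, y). (x, - y)) p) \<partial>(lborel \<Otimes>\<^sub>M lborel))
      = (\<integral>\<^sup>+x. \<integral>\<^sup>+y. f x y * indicator A (x, - y) \<partial>lborel \<partial>lborel)"
      by (subst lborel.nn_integral_fst[symmetric]) (simp_all, measurable)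
    also have "\<dots> = (\<integral>\<^sup>+x. \<integral>\<^sup>+y. f x y * indicator A (x, y) \<partial>lborel \<partial>lborel)"
      using nn_integral_real_affine[of "\<lambda>y. f _ y * indicator A (_, - y)" "-1" 0]
      by (simp add: even cong: nn_integral_cong)
    also have "\<dots> = (\<integral>\<^sup>+q. case_prod f q * indicator A q \<partial>(lborel \<Otimes>\<^sub>M lborel))"
      by (subst lborel.nn_integral_fst[symmetric]) (simp_all, measurable)
    finally show "(\<integral>\<^sup>+p. case_prod f p * indicator A ((\<lambda>(x, y). (x, - y)) p) \<partial>(lborel \<Otimes>\<^sub>M lborel))
      = (\<integral>\<^sup>+q. case_prod f q * indicator A q \<partial>(lborel \<Otimes>\<^sub>M lborel))" .
  qed measurable
  then show ?thesis
    by simp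
qed

lemma distr_cong_compose:
  assumes "distr M N X = distr M N X'" "X \<in> measurable M N" "X' \<in> measurable M N"
    and "f \<in> measurable N L"
  shows "distr M L (\<lambda>\<omega>. f (X \<omega>)) = distr M L (\<lambda>\<omega>. f (X' \<omega>))"
  using distr_distr[of f N L X M] distr_distr[of f N L X' M] assms by (simp add: comp_def)

definition spherical_density :: "(real \<Rightarrow> real) \<Rightarrow> real \<Rightarrow> real \<Rightarrow> real \<Rightarrow> real" where
  "spherical_density g K x y = g (x\<^sup>2 + y\<^sup>2) / (pi * K)"

lemma radial_density_polar:
  assumes "0 < K" "\<And>u. 0 \<le> g u"
  shows "ennreal (indicator {0<..} r * (2 * r * g (r\<^sup>2) / K)) * ennreal (2 / pi)
    = ennreal (4 * spherical_density g K (r * sin \<theta>) (r * cos \<theta>)) * ennreal r * indicator {0<..} r"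
proof (cases "0 < r")
  case True
  have "(r * sin \<theta>)\<^sup>2 + (r * cos \<theta>)\<^sup>2 = r\<^sup>2"
    by (simp add: power_mult_distrib flip: distrib_left)
  then have "2 * r * g (r\<^sup>2) / K * (2 / pi) = 4 * spherical_density g K (r * sin \<theta>) (r * cos \<theta>) * r"
    by (simp add: spherical_density_def mult_ac)
  moreover have "0 \<le> spherical_density g K x y" for x y
    using assms by (simp add: spherical_density_def)
  ultimately show ?thesis
    using True assms by (simp add: ennreal_mult[symmetric] del: ennreal_mult'')
qed simp

lemma quadform_nonneg:
  assumes "-1 < \<rho>" "\<rho> < 1"
  shows "0 \<le> quadform m1 m2 \<sigma> \<rho> y u"
proof -
  have "(y - m1)\<^sup>2 - 2 * \<rho> * \<sigma> * (y - m1) * (u - m2) + \<sigma>\<^sup>2 * (u - m2)\<^sup>2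
      = (y - m1 - \<rho> * \<sigma> * (u - m2))\<^sup>2 + (1 - \<rho>\<^sup>2) * (\<sigma> * (u - m2))\<^sup>2"
    by algebra
  moreover have "0 < 1 - \<rho>\<^sup>2"
    using assms by (simp add: abs_square_less_1)
  ultimately show ?thesis
    by (simp add: quadform_def)
qed

lemma quadform_shear:
  assumes "\<sigma> \<noteq> 0" "-1 < \<rho>" "\<rho> < 1"
  shows "quadform m1 m2 \<sigma> \<rho> (m1 + \<sigma> * x) (m2 + \<rho> * x + sqrt (1 - \<rho>\<^sup>2) * z) = x\<^sup>2 + z\<^sup>2"
proof -
  define s where "s = sqrt (1 - \<rho>\<^sup>2)"
  have "0 < 1 - \<rho>\<^sup>2"
    using assms by (simp add: abs_square_less_1)
  then have "s\<^sup>2 = 1 - \<rho>\<^sup>2"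
    by (simp add: s_def)
  then have "(\<sigma> * x)\<^sup>2 - 2 * \<rho> * \<sigma> * (\<sigma> * x) * (\<rho> * x + s * z) + \<sigma>\<^sup>2 * (\<rho> * x + s * z)\<^sup>2
      = \<sigma>\<^sup>2 * (1 - \<rho>\<^sup>2) * (x\<^sup>2 + z\<^sup>2)"
    by algebra
  then show ?thesis
    using \<open>0 < 1 - \<rho>\<^sup>2\<close> assms(1) by (simp add: quadform_def s_def[symmetric])
qed

lemma biv_sym_density_shear:
  assumes "0 < \<sigma>" "-1 < \<rho>" "\<rho> < 1"
  shows "\<sigma> * sqrt (1 - \<rho>\<^sup>2)
      * biv_sym_density g K m1 m2 \<sigma> \<rho> (m1 + \<sigma> * x) (m2 + \<rho> * x + sqrt (1 - \<rho>\<^sup>2) * z)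
    = spherical_density g K x z"
proof -
  have "0 < sqrt (1 - \<rho>\<^sup>2)"
    using assms by (simp add: abs_square_less_1)
  then show ?thesis
    using assms
    by (simp add: biv_sym_density_def spherical_density_def quadform_shear real_sqrt_mult)
qed

lemma distributed_shear_biv_sym_density:
  assumes Z: "distributed M (lborel \<Otimes>\<^sub>M lborel) (\<lambda>\<omega>. (X \<omega>, Y \<omega>))
      (\<lambda>(x, y). ennreal (spherical_density g K x y))"
    and [measurable]: "g \<in> borel_measurable borel"
    and "0 < \<sigma>" "-1 < \<rho>" "\<rho> < 1"
  shows "distributed M (lborel \<Otimes>\<^sub>M lborel)
      (\<lambda>\<omega>. (m1 + \<sigma> * X \<omega>, m2 + \<rho> * X \<omega> + sqrt (1 - \<rho>\<^sup>2) * Y \<omega>))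
      (\<lambda>(y, u). ennreal (biv_sym_density g K m1 m2 \<sigma> \<rho> y u))"
proof -
  define s where "s = sqrt (1 - \<rho>\<^sup>2)"
  have "0 < s"
    using assms by (simp add: s_def abs_square_less_1)
  define T where "T p = (m1 + \<sigma> * fst p, m2 + \<rho> * fst p + s * snd p)" for p :: "real \<times> real"
  have [measurable]: "T \<in> measurable (lborel \<Otimes>\<^sub>M lborel) (lborel \<Otimes>\<^sub>M lborel)"
    unfolding T_def by measurable
  have [measurable]: "(\<lambda>(y, u). ennreal (biv_sym_density g K m1 m2 \<sigma> \<rho> y u))
      \<in> borel_measurable (lborel \<Otimes>\<^sub>M lborel)"
    unfolding biv_sym_density_def quadform_def by measurable
  have "distributed M (lborel \<Otimes>\<^sub>M lborel) (\<lambda>\<omega>. T (X \<omega>, Y \<omega>))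
      (\<lambda>(y, u). ennreal (biv_sym_density g K m1 m2 \<sigma> \<rho> y u))"
  proof (rule distributed_compose_density[OF Z])
    fix A :: "(real \<times> real) set" assume [measurable]: "A \<in> sets (lborel \<Otimes>\<^sub>M lborel)"
    have "(\<integral>\<^sup>+q. (\<lambda>(y, u). ennreal (biv_sym_density g K m1 m2 \<sigma> \<rho> y u)) q * indicator A q
        \<partial>(lborel \<Otimes>\<^sub>M lborel))
      = (\<integral>\<^sup>+y. \<integral>\<^sup>+u. ennreal (biv_sym_density g K m1 m2 \<sigma> \<rho> y u) * indicator A (y, u)
        \<partial>lborel \<partial>lborel)"
      by (subst lborel.nn_integral_fst[symmetric]) (simp_all, measurable)
    also have "\<dots> = (\<integral>\<^sup>+x. \<integral>\<^sup>+z. ennreal (\<sigma> * s)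
        * (ennreal (biv_sym_density g K m1 m2 \<sigma> \<rho> (m1 + \<sigma> * x) (m2 + \<rho> * x + s * z))
        * indicator A (T (x, z))) \<partial>lborel \<partial>lborel)"
      using \<open>0 < \<sigma>\<close> \<open>0 < s\<close> by (subst nn_integral_lborel_pair_shear) (simp_all add: T_def, measurable)
    also have "\<dots> = (\<integral>\<^sup>+x. \<integral>\<^sup>+z. ennreal (spherical_density g K x z) * indicator A (T (x, z))
        \<partial>lborel \<partial>lborel)"
      using \<open>0 < \<sigma>\<close> \<open>0 < s\<close> assms(4,5)
      by (intro nn_integral_cong)
         (simp add: ennreal_mult'[symmetric] mult.assoc[symmetric] biv_sym_density_shear s_def)
    also have "\<dots> = (\<integral>\<^sup>+p. (\<lambda>(x, y). ennreal (spherical_density g K x y)) p * indicator A (T p)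
        \<partial>(lborel \<Otimes>\<^sub>M lborel))"
      unfolding spherical_density_def T_def by (subst lborel.nn_integral_fst[symmetric]) (simp_all, measurable)
    finally show "(\<integral>\<^sup>+p. (\<lambda>(x, y). ennreal (spherical_density g K x y)) p * indicator A (T p)
        \<partial>(lborel \<Otimes>\<^sub>M lborel))
      = (\<integral>\<^sup>+q. (\<lambda>(y, u). ennreal (biv_sym_density g K m1 m2 \<sigma> \<rho> y u)) q * indicator A q
        \<partial>(lborel \<Otimes>\<^sub>M lborel))" ..
  qed measurable
  then show ?thesis
    by (simp add: T_def s_def)
qed

lemma Gfun_nonneg:
  assumes "\<And>w. 0 \<le> f z w" "0 \<le> m z"
  shows "0 \<le> Gfun f m z x"
  unfolding Gfun_def set_lebesgue_integral_def
  using assms by (intro Bochner_Integration.integral_nonneg) (simp split: split_indicator)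

lemma ennreal_mult_Gfun:
  fixes f :: "real \<Rightarrow> real \<Rightarrow> real" and m :: "real \<Rightarrow> real"
  assumes [measurable]: "f z \<in> borel_measurable borel" and nonneg: "\<And>w. 0 \<le> f z w"
    and marginal: "(\<integral>\<^sup>+w. ennreal (f z w) \<partial>lborel) = ennreal (m z)"
  shows "ennreal (if m z = 0 then 0 else m z * Gfun f m z x)
       = (\<integral>\<^sup>+w. ennreal (f z w) * indicator {..x} w \<partial>lborel)"
proof (cases "m z = 0")
  case True
  have "(\<integral>\<^sup>+w. ennreal (f z w) * indicator {..x} w \<partial>lborel) \<le> (\<integral>\<^sup>+w. ennreal (f z w) \<partial>lborel)"
    by (intro nn_integral_mono) (auto split: split_indicator)
  with True marginal show ?thesis
    by simp
next
  case False
  have "integrable lborel (f z)"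
    using marginal nonneg by (intro integrableI_nonneg) auto
  then have "integrable lborel (\<lambda>w. indicator {..x} w *\<^sub>R f z w)"
    by (rule integrable_mult_indicator[rotated]) simp
  then have "(\<integral>\<^sup>+w. ennreal (indicator {..x} w *\<^sub>R f z w) \<partial>lborel) = ennreal (LINT w:{..x}|lborel. f z w)"
    unfolding set_lebesgue_integral_def by (rule nn_integral_eq_integral) (simp add: nonneg)
  moreover have "(\<integral>\<^sup>+w. ennreal (f z w) * indicator {..x} w \<partial>lborel)
      = (\<integral>\<^sup>+w. ennreal (indicator {..x} w *\<^sub>R f z w) \<partial>lborel)"
    by (intro nn_integral_cong) (simp split: split_indicator)
  moreover have "m z * Gfun f m z x = (LINT w:{..x}|lborel. f z w)"
    using False by (simp add: Gfun_def set_lebesgue_integral_def)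
  ultimately show ?thesis
    using False by simp
qed

context prob_space
begin

lemma indep_vars_list4D:
  fixes A B C E :: "'a \<Rightarrow> real"
  assumes ind: "indep_vars (\<lambda>_. borel) (\<lambda>i. [A, B, C, E] ! i) {..<4}"
  shows "A \<in> borel_measurable M" "B \<in> borel_measurable M"
    and "C \<in> borel_measurable M" "E \<in> borel_measurable M"
    and "indep_var (lborel \<Otimes>\<^sub>M lborel) (\<lambda>\<omega>. (A \<omega>, B \<omega>)) (lborel \<Otimes>\<^sub>M lborel) (\<lambda>\<omega>. (C \<omega>, E \<omega>))"
    and "indep_var lborel A lborel B" and "indep_var lborel C lborel E"
proof -
  let ?X = "\<lambda>i. [A, B, C, E] ! i"
  have "\<forall>i<4. ?X i \<in> borel_measurable M"
    using ind by (auto simp: indep_vars_def)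
  then show "A \<in> borel_measurable M" "B \<in> borel_measurable M"
    "C \<in> borel_measurable M" "E \<in> borel_measurable M"
    by (auto dest: spec[of _ 0] spec[of _ 1] spec[of _ 2] spec[of _ 3])
  have pair: "(\<lambda>x. (x i, x j)) \<in> measurable (PiM {i, j} (\<lambda>_. borel)) (lborel \<Otimes>\<^sub>M lborel)" for i j :: nat
    by measurable
  have single: "(\<lambda>x. x i) \<in> measurable (PiM {i} (\<lambda>_. borel)) lborel" for i :: nat
    by measurable
  have "indep_var (PiM {0, 1} (\<lambda>_. borel)) (\<lambda>\<omega>. restrict (\<lambda>i. ?X i \<omega>) {0, 1})
      (PiM {2, 3} (\<lambda>_. borel)) (\<lambda>\<omega>. restrict (\<lambda>i. ?X i \<omega>) {2, 3})"
    by (rule indep_var_restrict[OF ind]) auto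
  from indep_var_compose[OF this pair pair]
  show "indep_var (lborel \<Otimes>\<^sub>M lborel) (\<lambda>\<omega>. (A \<omega>, B \<omega>)) (lborel \<Otimes>\<^sub>M lborel) (\<lambda>\<omega>. (C \<omega>, E \<omega>))"
    by (simp add: comp_def)
  have "indep_var (PiM {0} (\<lambda>_. borel)) (\<lambda>\<omega>. restrict (\<lambda>i. ?X i \<omega>) {0})
      (PiM {1} (\<lambda>_. borel)) (\<lambda>\<omega>. restrict (\<lambda>i. ?X i \<omega>) {1})"
    by (rule indep_var_restrict[OF ind]) auto
  from indep_var_compose[OF this single single]
  show "indep_var lborel A lborel B"
    by (simp add: comp_def)
  have "indep_var (PiM {2} (\<lambda>_. borel)) (\<lambda>\<omega>. restrict (\<lambda>i. ?X i \<omega>) {2})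
      (PiM {3} (\<lambda>_. borel)) (\<lambda>\<omega>. restrict (\<lambda>i. ?X i \<omega>) {3})"
    by (rule indep_var_restrict[OF ind]) auto
  from indep_var_compose[OF this single single]
  show "indep_var lborel C lborel E"
    by (simp add: comp_def)
qed

lemma nn_integral_indep_var:
  assumes ind: "indep_var S X T Y" and [measurable]: "\<Psi> \<in> borel_measurable (S \<Otimes>\<^sub>M T)"
  shows "(\<integral>\<^sup>+\<omega>. \<Psi> (X \<omega>, Y \<omega>) \<partial>M) = (\<integral>\<^sup>+\<omega>. \<integral>\<^sup>+\<omega>'. \<Psi> (X \<omega>, Y \<omega>') \<partial>M \<partial>M)"
proof -
  have [measurable]: "X \<in> measurable M S" "Y \<in> measurable M T"
    using indep_var_rv1[OF ind] indep_var_rv2[OF ind] by auto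
  interpret PX: prob_space "distr M S X"
    by (rule prob_space_distr) measurable
  interpret PY: prob_space "distr M T Y"
    by (rule prob_space_distr) measurable
  have "sets (distr M S X \<Otimes>\<^sub>M distr M T Y) = sets (S \<Otimes>\<^sub>M T)"
    by (intro sets_pair_measure_cong) simp_all
  then have [measurable]: "\<Psi> \<in> borel_measurable (distr M S X \<Otimes>\<^sub>M distr M T Y)"
    by (subst measurable_cong_sets[OF _ refl]) (assumption, measurable)
  have "(\<integral>\<^sup>+\<omega>. \<Psi> (X \<omega>, Y \<omega>) \<partial>M) = (\<integral>\<^sup>+p. \<Psi> p \<partial>distr M (S \<Otimes>\<^sub>M T) (\<lambda>\<omega>. (X \<omega>, Y \<omega>)))"
    by (rule nn_integral_distr[symmetric]) measurable
  also have "\<dots> = (\<integral>\<^sup>+p. \<Psi> p \<partial>(distr M S X \<Otimes>\<^sub>M distr M T Y))"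
    using ind by (simp add: indep_var_distribution_eq)
  also have "\<dots> = (\<integral>\<^sup>+x. \<integral>\<^sup>+y. \<Psi> (x, y) \<partial>distr M T Y \<partial>distr M S X)"
    by (rule PY.nn_integral_fst[symmetric]) measurable
  also have "\<dots> = (\<integral>\<^sup>+\<omega>. \<integral>\<^sup>+y. \<Psi> (X \<omega>, y) \<partial>distr M T Y \<partial>M)"
    by (rule nn_integral_distr) measurable
  also have "\<dots> = (\<integral>\<^sup>+\<omega>. \<integral>\<^sup>+\<omega>'. \<Psi> (X \<omega>, Y \<omega>') \<partial>M \<partial>M)"
    by (intro nn_integral_cong nn_integral_distr) measurable
  finally show ?thesis .
qed

lemma nn_integral_rademacher:
  fixes V :: "'a \<Rightarrow> real" and f :: "real \<Rightarrow> ennreal"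
  assumes [measurable]: "V \<in> borel_measurable M"
    and "prob {\<omega> \<in> space M. V \<omega> = -1} = 1/2" "prob {\<omega> \<in> space M. V \<omega> = 1} = 1/2"
  shows "2 * (\<integral>\<^sup>+\<omega>. f (V \<omega>) \<partial>M) = f (-1) + f 1"
proof -
  define N where "N = {\<omega> \<in> space M. V \<omega> = -1}"
  define P where "P = {\<omega> \<in> space M. V \<omega> = 1}"
  have [measurable]: "N \<in> sets M" "P \<in> sets M"
    unfolding N_def P_def by measurable
  have half: "emeasure M N = ennreal (1/2)" "emeasure M P = ennreal (1/2)"
    unfolding emeasure_eq_measure N_def P_def assms(2,3) by simp_all
  have "prob (N \<union> P) = 1"
    using assms by (subst finite_measure_Union) (auto simp: N_def P_def)
  then have "AE \<omega> in M. \<omega> \<in> N \<union> P"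
    by (rule AE_prob_1)
  then have "(\<integral>\<^sup>+\<omega>. f (V \<omega>) \<partial>M) = (\<integral>\<^sup>+\<omega>. f (-1) * indicator N \<omega> + f 1 * indicator P \<omega> \<partial>M)"
    by (intro nn_integral_cong_AE) (auto elim!: eventually_mono simp: N_def P_def split: split_indicator)
  also have "\<dots> = f (-1) * emeasure M N + f 1 * emeasure M P"
    by (simp add: nn_integral_add nn_integral_cmult_indicator)
  finally have "2 * (\<integral>\<^sup>+\<omega>. f (V \<omega>) \<partial>M) = (f (-1) + f 1) * (2 * inverse 2)"
    using half by (simp add: algebra_simps)
  moreover have "2 * inverse 2 = (1 :: ennreal)"
    by (simp add: divide_ennreal_def[symmetric])
  ultimately show ?thesis
    by simp
qed

lemma nn_integral_rademacher_pair:
  fixes V1 V2 :: "'a \<Rightarrow> real" and J :: "real \<times> real \<Rightarrow> ennreal"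
  assumes ind: "indep_var lborel V1 lborel V2"
    and V1: "prob {\<omega> \<in> space M. V1 \<omega> = -1} = 1/2" "prob {\<omega> \<in> space M. V1 \<omega> = 1} = 1/2"
    and V2: "prob {\<omega> \<in> space M. V2 \<omega> = -1} = 1/2" "prob {\<omega> \<in> space M. V2 \<omega> = 1} = 1/2"
    and [measurable]: "J \<in> borel_measurable (lborel \<Otimes>\<^sub>M lborel)"
  shows "4 * (\<integral>\<^sup>+\<omega>. J (V1 \<omega>, V2 \<omega>) \<partial>M) = J (-1, -1) + J (-1, 1) + J (1, -1) + J (1, 1)"
proof -
  have [measurable]: "V1 \<in> borel_measurable M" "V2 \<in> borel_measurable M"
    using indep_var_rv1[OF ind] indep_var_rv2[OF ind] by auto
  have "4 * (\<integral>\<^sup>+\<omega>. J (V1 \<omega>, V2 \<omega>) \<partial>M) = 2 * (2 * (\<integral>\<^sup>+\<omega>. \<integral>\<^sup>+\<omega>'. J (V1 \<omega>, V2 \<omega>') \<partial>M \<partial>M))"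
    by (simp add: nn_integral_indep_var[OF ind] mult.assoc[symmetric])
  also have "\<dots> = 2 * (\<integral>\<^sup>+\<omega>'. J (-1, V2 \<omega>') \<partial>M) + 2 * (\<integral>\<^sup>+\<omega>'. J (1, V2 \<omega>') \<partial>M)"
    by (subst nn_integral_rademacher[OF _ V1]) (simp_all add: distrib_left)
  also have "\<dots> = J (-1, -1) + J (-1, 1) + J (1, -1) + J (1, 1)"
    using nn_integral_rademacher[OF _ V2, where f = "\<lambda>v. J (-1, v)"]
      nn_integral_rademacher[OF _ V2, where f = "\<lambda>v. J (1, v)"]
    by (simp add: add.assoc)
  finally show ?thesis .
qed

lemma nn_integral_radius_arcsine:
  fixes R D :: "'a \<Rightarrow> real" and g :: "real \<Rightarrow> real" and \<Phi> :: "real \<times> real \<Rightarrow> ennreal"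
  assumes [measurable]: "g \<in> borel_measurable borel" and g_nonneg: "\<And>u. 0 \<le> g u" and "0 < K"
    and ind: "indep_var lborel R lborel D"
    and Rdist: "distributed M lborel R (\<lambda>r. ennreal (indicator {0<..} r * (2 * r * g (r\<^sup>2) / K)))"
    and Ddist: "distributed M lborel D
      (\<lambda>d. ennreal (indicator {0<..<1} d * (2 / (pi * sqrt (1 - d\<^sup>2)))))"
    and [measurable]: "\<Phi> \<in> borel_measurable (lborel \<Otimes>\<^sub>M lborel)"
  shows "(\<integral>\<^sup>+\<omega>. \<Phi> (R \<omega> * D \<omega>, R \<omega> * sqrt (1 - (D \<omega>)\<^sup>2)) \<partial>M)
       = (\<integral>\<^sup>+x. \<integral>\<^sup>+y. ennreal (4 * spherical_density g K x y) * \<Phi> (x, y)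
            * indicator {0<..} x * indicator {0<..} y \<partial>lborel \<partial>lborel)"
proof -
  define fR where "fR r = ennreal (indicator {0<..} r * (2 * r * g (r\<^sup>2) / K))" for r
  define fD where "fD d = ennreal (indicator {0<..<1} d * (2 / (pi * sqrt (1 - d\<^sup>2))))" for d
  define F where "F x y = ennreal (4 * spherical_density g K x y) * \<Phi> (x, y)" for x y
  have [measurable]: "case_prod F \<in> borel_measurable (lborel \<Otimes>\<^sub>M lborel)"
    unfolding F_def spherical_density_def by measurable
  have RD: "distributed M (lborel \<Otimes>\<^sub>M lborel) (\<lambda>\<omega>. (R \<omega>, D \<omega>)) (\<lambda>(r, d). fR r * fD d)"
    unfolding fR_def fD_def
    by (rule distributed_joint_indep[OF lborel.sigma_finite_measure_axioms
          lborel.sigma_finite_measure_axioms Rdist Ddist ind])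
  have angular: "(\<integral>\<^sup>+d. fR r * fD d * \<Phi> (r * d, r * sqrt (1 - d\<^sup>2)) \<partial>lborel)
    = (\<integral>\<^sup>+\<theta>. F (r * sin \<theta>) (r * cos \<theta>) * ennreal r
      * indicator {0<..} r * indicator {0<..<pi/2} \<theta> \<partial>lborel)" for r
  proof -
    have "(\<integral>\<^sup>+d. fR r * fD d * \<Phi> (r * d, r * sqrt (1 - d\<^sup>2)) \<partial>lborel)
        = fR r * (\<integral>\<^sup>+d. fD d * \<Phi> (r * d, r * sqrt (1 - d\<^sup>2)) \<partial>lborel)"
      unfolding fD_def by (subst nn_integral_cmult[symmetric]) (measurable, simp add: mult.assoc)
    also have "\<dots> = fR r * (\<integral>\<^sup>+\<theta>. ennreal (2 / pi) * \<Phi> (r * sin \<theta>, r * cos \<theta>)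
        * indicator {0<..<pi/2} \<theta> \<partial>lborel)"
      unfolding fD_def
      by (subst nn_integral_arcsine_density[where \<psi> = "\<lambda>d e. \<Phi> (r * d, r * e)"]) (simp_all, measurable)
    also have "\<dots> = (\<integral>\<^sup>+\<theta>. F (r * sin \<theta>) (r * cos \<theta>) * ennreal r
        * indicator {0<..} r * indicator {0<..<pi/2} \<theta> \<partial>lborel)"
    proof (subst nn_integral_cmult[symmetric], measurable, intro nn_integral_cong)
      fix \<theta> :: real
      have "fR r * (ennreal (2 / pi) * \<Phi> (r * sin \<theta>, r * cos \<theta>) * indicator {0<..<pi/2} \<theta>)
          = fR r * ennreal (2 / pi) * \<Phi> (r * sin \<theta>, r * cos \<theta>) * indicator {0<..<pi/2} \<theta>"
        by (simp only: mult.assoc)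
      also have "\<dots> = ennreal (4 * spherical_density g K (r * sin \<theta>) (r * cos \<theta>)) * ennreal r
          * indicator {0<..} r * \<Phi> (r * sin \<theta>, r * cos \<theta>) * indicator {0<..<pi/2} \<theta>"
        unfolding fR_def by (simp only: radial_density_polar[where g = g and r = r and \<theta> = \<theta>, OF \<open>0 < K\<close> g_nonneg])
      finally show "fR r * (ennreal (2 / pi) * \<Phi> (r * sin \<theta>, r * cos \<theta>) * indicator {0<..<pi/2} \<theta>)
          = F (r * sin \<theta>) (r * cos \<theta>) * ennreal r * indicator {0<..} r * indicator {0<..<pi/2} \<theta>"
        by (simp add: F_def mult_ac)
    qed
    finally show ?thesis .
  qed
  have "(\<integral>\<^sup>+\<omega>. \<Phi> (R \<omega> * D \<omega>, R \<omega> * sqrt (1 - (D \<omega>)\<^sup>2)) \<partial>M)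
      = (\<integral>\<^sup>+p. (\<lambda>(r, d). fR r * fD d) p * (\<lambda>(r, d). \<Phi> (r * d, r * sqrt (1 - d\<^sup>2))) p
          \<partial>(lborel \<Otimes>\<^sub>M lborel))"
    unfolding fR_def fD_def by (subst distributed_nn_integral[OF RD[unfolded fR_def fD_def]]) (simp_all, measurable)
  also have "\<dots> = (\<integral>\<^sup>+r. \<integral>\<^sup>+\<theta>. F (r * sin \<theta>) (r * cos \<theta>) * ennreal r
      * indicator {0<..} r * indicator {0<..<pi/2} \<theta> \<partial>lborel \<partial>lborel)"
    unfolding angular[symmetric] unfolding fR_def fD_def
    by (subst lborel.nn_integral_fst[symmetric]) (simp_all, measurable)
  also have "\<dots> = (\<integral>\<^sup>+x. \<integral>\<^sup>+y. F x y * indicator {0<..} x * indicator {0<..} y \<partial>lborel \<partial>lborel)"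
    by (rule nn_integral_polar_quadrant) measurable
  finally show ?thesis
    by (simp add: F_def)
qed

lemma distributed_polar_representation:
  fixes V1 V2 R D :: "'a \<Rightarrow> real" and g :: "real \<Rightarrow> real"
  assumes [measurable]: "g \<in> borel_measurable borel" and g_nonneg: "\<And>u. 0 \<le> g u" and "0 < K"
    and indep: "indep_vars (\<lambda>_. borel) (\<lambda>i. [V1, V2, R, D] ! i) {..<4}"
    and V1: "prob {\<omega> \<in> space M. V1 \<omega> = -1} = 1/2" "prob {\<omega> \<in> space M. V1 \<omega> = 1} = 1/2"
    and V2: "prob {\<omega> \<in> space M. V2 \<omega> = -1} = 1/2" "prob {\<omega> \<in> space M. V2 \<omega> = 1} = 1/2"
    and Ddist: "distributed M lborel D
      (\<lambda>d. ennreal (indicator {0<..<1} d * (2 / (pi * sqrt (1 - d\<^sup>2)))))"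
    and Rdist: "distributed M lborel R (\<lambda>r. ennreal (indicator {0<..} r * (2 * r * g (r\<^sup>2) / K)))"
  shows "distributed M (lborel \<Otimes>\<^sub>M lborel)
      (\<lambda>\<omega>. (R \<omega> * D \<omega> * V1 \<omega>, R \<omega> * sqrt (1 - (D \<omega>)\<^sup>2) * V2 \<omega>))
      (\<lambda>(x, y). ennreal (spherical_density g K x y))"
proof (rule distributedI_nn_integral)
  note ind = indep_vars_list4D[OF indep]
  note [measurable] = ind(1-4)
  show "(\<lambda>\<omega>. (R \<omega> * D \<omega> * V1 \<omega>, R \<omega> * sqrt (1 - (D \<omega>)\<^sup>2) * V2 \<omega>))
      \<in> measurable M (lborel \<Otimes>\<^sub>M lborel)"
    by measurable
  show "(\<lambda>(x, y). ennreal (spherical_density g K x y)) \<in> borel_measurable (lborel \<Otimes>\<^sub>M lborel)"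
    unfolding spherical_density_def by measurable
  fix A :: "(real \<times> real) set" assume [measurable]: "A \<in> sets (lborel \<Otimes>\<^sub>M lborel)"
  define Q where "Q a b = (\<integral>\<^sup>+x. \<integral>\<^sup>+y. ennreal (spherical_density g K (a * x) (b * y))
      * indicator A (a * x, b * y) * indicator {0<..} x * indicator {0<..} y \<partial>lborel \<partial>lborel)"
    for a b :: real
  define J where "J v = (\<integral>\<^sup>+\<omega>. indicator A (R \<omega> * D \<omega> * fst v, R \<omega> * sqrt (1 - (D \<omega>)\<^sup>2) * snd v) \<partial>M)"
    for v :: "real \<times> real"
  have four: "ennreal (4 * r) = 4 * ennreal r" for r
    by (simp add: ennreal_mult')
  have J_Q: "J (a, b) = 4 * Q a b" if "a\<^sup>2 = 1" "b\<^sup>2 = 1" for a b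
  proof -
    have "J (a, b) = (\<integral>\<^sup>+x. \<integral>\<^sup>+y. ennreal (4 * spherical_density g K x y) * indicator A (x * a, y * b)
        * indicator {0<..} x * indicator {0<..} y \<partial>lborel \<partial>lborel)"
      unfolding J_def fst_conv snd_conv
      by (rule nn_integral_radius_arcsine[OF _ g_nonneg \<open>0 < K\<close> ind(7) Rdist Ddist,
            of "\<lambda>(x, y). indicator A (x * a, y * b)", simplified]) measurable
    also have "\<dots> = (\<integral>\<^sup>+x. \<integral>\<^sup>+y. 4 * (ennreal (spherical_density g K (a * x) (b * y))
        * indicator A (a * x, b * y) * indicator {0<..} x * indicator {0<..} y) \<partial>lborel \<partial>lborel)"
      using that unfolding four by (simp add: spherical_density_def power_mult_distrib mult_ac)
    also have "\<dots> = 4 * Q a b"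
      unfolding Q_def spherical_density_def by (simp add: nn_integral_cmult)
    finally show ?thesis .
  qed
  have [measurable]: "J \<in> borel_measurable (lborel \<Otimes>\<^sub>M lborel)"
    unfolding J_def by measurable
  have "(\<integral>\<^sup>+\<omega>. indicator A (R \<omega> * D \<omega> * V1 \<omega>, R \<omega> * sqrt (1 - (D \<omega>)\<^sup>2) * V2 \<omega>) \<partial>M)
      = (\<integral>\<^sup>+\<omega>. J (V1 \<omega>, V2 \<omega>) \<partial>M)"
    unfolding J_def fst_conv snd_conv
    by (rule nn_integral_indep_var[OF ind(5), of "\<lambda>(v, w). indicator A
        (fst w * snd w * fst v, fst w * sqrt (1 - (snd w)\<^sup>2) * snd v)", simplified]) measurable
  then have "4 * (\<integral>\<^sup>+\<omega>. indicator A (R \<omega> * D \<omega> * V1 \<omega>, R \<omega> * sqrt (1 - (D \<omega>)\<^sup>2) * V2 \<omega>) \<partial>M)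
      = 4 * (\<integral>\<^sup>+\<omega>. J (V1 \<omega>, V2 \<omega>) \<partial>M)"
    by simp
  also have "\<dots> = 4 * (Q 1 1 + Q 1 (-1) + Q (-1) 1 + Q (-1) (-1))"
    by (simp add: nn_integral_rademacher_pair[OF ind(6) V1 V2] J_Q algebra_simps)
  also have "Q 1 1 + Q 1 (-1) + Q (-1) 1 + Q (-1) (-1)
      = (\<integral>\<^sup>+x. \<integral>\<^sup>+y. ennreal (spherical_density g K x y) * indicator A (x, y) \<partial>lborel \<partial>lborel)"
    unfolding Q_def
    by (rule nn_integral_lborel_pair_quadrants[symmetric]) (unfold spherical_density_def, measurable)
  also have "\<dots> = (\<integral>\<^sup>+p. (\<lambda>(x, y). ennreal (spherical_density g K x y)) p * indicator A p
      \<partial>(lborel \<Otimes>\<^sub>M lborel))"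
    unfolding spherical_density_def by (subst lborel.nn_integral_fst[symmetric]) (simp_all, measurable)
  finally show "(\<integral>\<^sup>+\<omega>. indicator A (R \<omega> * D \<omega> * V1 \<omega>, R \<omega> * sqrt (1 - (D \<omega>)\<^sup>2) * V2 \<omega>) \<partial>M)
      = (\<integral>\<^sup>+p. (\<lambda>(x, y). ennreal (spherical_density g K x y)) p * indicator A p \<partial>(lborel \<Otimes>\<^sub>M lborel))"
    by (simp add: ennreal_mult_cancel_left)
qed

lemma biv_sym_stochastic_representation:
  fixes V1 V2 R D Y U :: "'a \<Rightarrow> real" and g :: "real \<Rightarrow> real"
  assumes g_meas: "set_borel_measurable borel {0..} g" and g_nonneg: "\<And>u. 0 \<le> u \<Longrightarrow> 0 \<le> g u"
    and "0 < K" "0 < \<sigma>" "-1 < \<rho>" "\<rho> < 1"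
    and YU: "distributed M (lborel \<Otimes>\<^sub>M lborel) (\<lambda>\<omega>. (Y \<omega>, U \<omega>))
      (\<lambda>(y, u). ennreal (biv_sym_density g K m1 m2 \<sigma> \<rho> y u))"
    and indep: "indep_vars (\<lambda>_. borel) (\<lambda>i. [V1, V2, R, D] ! i) {..<4}"
    and V1: "prob {\<omega> \<in> space M. V1 \<omega> = -1} = 1/2" "prob {\<omega> \<in> space M. V1 \<omega> = 1} = 1/2"
    and V2: "prob {\<omega> \<in> space M. V2 \<omega> = -1} = 1/2" "prob {\<omega> \<in> space M. V2 \<omega> = 1} = 1/2"
    and Ddist: "distributed M lborel D
      (\<lambda>d. ennreal (indicator {0<..<1} d * (2 / (pi * sqrt (1 - d\<^sup>2)))))"
    and Rdist: "distributed M lborel R (\<lambda>r. ennreal (indicator {0<..} r * (2 * r * g (r\<^sup>2) / K)))"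
  defines "Z1 \<equiv> \<lambda>\<omega>. R \<omega> * D \<omega> * V1 \<omega>" and "Z2 \<equiv> \<lambda>\<omega>. R \<omega> * sqrt (1 - (D \<omega>)\<^sup>2) * V2 \<omega>"
  shows "distr M (lborel \<Otimes>\<^sub>M lborel) (\<lambda>\<omega>. (Y \<omega>, U \<omega>)) = distr M (lborel \<Otimes>\<^sub>M lborel)
      (\<lambda>\<omega>. (m1 + \<sigma> * Z1 \<omega>, m2 + \<rho> * Z1 \<omega> + sqrt (1 - \<rho>\<^sup>2) * Z2 \<omega>))"
    and "distr M (lborel \<Otimes>\<^sub>M lborel) (\<lambda>\<omega>. (Y \<omega>, U \<omega>)) = distr M (lborel \<Otimes>\<^sub>M lborel)
      (\<lambda>\<omega>. (m1 + \<sigma> * Z1 \<omega>, m2 + \<rho> * Z1 \<omega> - sqrt (1 - \<rho>\<^sup>2) * Z2 \<omega>))"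
proof -
  \<comment> \<open>\<open>g\<close> is only given on \<open>[0, \<infinity>)\<close>; all densities evaluate it at nonnegative arguments.\<close>
  define g0 where "g0 = (\<lambda>u. indicator {0..} u * g u)"
  have [measurable]: "g0 \<in> borel_measurable borel"
    using g_meas by (simp add: g0_def set_borel_measurable_def)
  have g0_nonneg: "0 \<le> g0 u" for u
    using g_nonneg by (simp add: g0_def indicator_def)
  have Rdist0: "distributed M lborel R (\<lambda>r. ennreal (indicator {0<..} r * (2 * r * g0 (r\<^sup>2) / K)))"
    using Rdist by (simp add: g0_def)
  have "biv_sym_density g0 K m1 m2 \<sigma> \<rho> = biv_sym_density g K m1 m2 \<sigma> \<rho>"
    using quadform_nonneg[OF assms(5,6)] by (simp add: fun_eq_iff biv_sym_density_def g0_def)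
  then have YU_law: "distr M (lborel \<Otimes>\<^sub>M lborel) (\<lambda>\<omega>. (Y \<omega>, U \<omega>))
      = density (lborel \<Otimes>\<^sub>M lborel) (\<lambda>(y, u). ennreal (biv_sym_density g0 K m1 m2 \<sigma> \<rho> y u))"
    using distributed_distr_eq_density[OF YU] by simp
  have Z: "distributed M (lborel \<Otimes>\<^sub>M lborel) (\<lambda>\<omega>. (Z1 \<omega>, Z2 \<omega>))
      (\<lambda>(x, y). ennreal (spherical_density g0 K x y))"
    unfolding Z1_def Z2_def
    by (rule distributed_polar_representation[OF _ g0_nonneg \<open>0 < K\<close> indep V1 V2 Ddist Rdist0]) measurable
  then have Z_reflected: "distributed M (lborel \<Otimes>\<^sub>M lborel) (\<lambda>\<omega>. (Z1 \<omega>, - Z2 \<omega>))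
      (\<lambda>(x, y). ennreal (spherical_density g0 K x y))"
    by (rule distributed_reflect_snd) (simp add: spherical_density_def)
  show "distr M (lborel \<Otimes>\<^sub>M lborel) (\<lambda>\<omega>. (Y \<omega>, U \<omega>)) = distr M (lborel \<Otimes>\<^sub>M lborel)
      (\<lambda>\<omega>. (m1 + \<sigma> * Z1 \<omega>, m2 + \<rho> * Z1 \<omega> + sqrt (1 - \<rho>\<^sup>2) * Z2 \<omega>))"
    "distr M (lborel \<Otimes>\<^sub>M lborel) (\<lambda>\<omega>. (Y \<omega>, U \<omega>)) = distr M (lborel \<Otimes>\<^sub>M lborel)
      (\<lambda>\<omega>. (m1 + \<sigma> * Z1 \<omega>, m2 + \<rho> * Z1 \<omega> - sqrt (1 - \<rho>\<^sup>2) * Z2 \<omega>))"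
    unfolding YU_law
    using distributed_distr_eq_density[OF distributed_shear_biv_sym_density[OF Z _ \<open>0 < \<sigma>\<close> assms(5,6)]]
      distributed_distr_eq_density[OF distributed_shear_biv_sym_density[OF Z_reflected _ \<open>0 < \<sigma>\<close> assms(5,6)]]
    by simp_all
qed

lemma prob_pos_eq_Hfun:
  fixes U S :: "'a \<Rightarrow> real" and fS :: "real \<Rightarrow> real"
  assumes law: "distr M lborel U = distr M lborel (\<lambda>\<omega>. m + S \<omega>)"
    and [measurable]: "U \<in> borel_measurable M"
    and fS: "distributed M lborel S (\<lambda>s. ennreal (fS s))" and fS_nonneg: "\<And>s. 0 \<le> fS s"
  shows "prob {\<omega> \<in> space M. 0 < U \<omega>} = Hfun fS m"
proof -
  have [measurable]: "S \<in> borel_measurable M"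
    using fS by (auto simp: distributed_def)
  have "prob {\<omega> \<in> space M. 0 < U \<omega>} = measure (distr M lborel U) {0<..}"
    by (subst measure_distr) (auto intro!: arg_cong[where f = prob])
  also have "\<dots> = prob {\<omega> \<in> space M. S \<omega> \<in> {- m<..}}"
    unfolding law by (subst measure_distr) (auto intro!: arg_cong[where f = prob])
  also have "\<dots> = (\<integral>\<omega>. indicator {\<omega> \<in> space M. S \<omega> \<in> {- m<..}} \<omega> \<partial>M)"
    by simp
  also have "\<dots> = (\<integral>\<omega>. indicator {- m<..} (S \<omega>) \<partial>M)"
    by (intro Bochner_Integration.integral_cong) (auto split: split_indicator)
  also have "\<dots> = (\<integral>s. fS s * indicator {- m<..} s \<partial>lborel)"
    by (rule distributed_integral[OF fS, symmetric]) (auto simp: fS_nonneg)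
  also have "\<dots> = Hfun fS m"
    by (simp add: Hfun_def set_lebesgue_integral_def mult.commute)
  finally show ?thesis .
qed

lemma emeasure_selection_joint_density:
  fixes Y U Z1 Z2 :: "'a \<Rightarrow> real" and fZ12 :: "real \<Rightarrow> real \<Rightarrow> real"
  assumes [measurable]: "Y \<in> borel_measurable M" "U \<in> borel_measurable M" "B \<in> sets borel"
    and law: "distr M (lborel \<Otimes>\<^sub>M lborel) (\<lambda>\<omega>. (Y \<omega>, U \<omega>))
      = distr M (lborel \<Otimes>\<^sub>M lborel) (\<lambda>\<omega>. (m1 + \<sigma> * Z1 \<omega>, m2 + \<rho> * Z1 \<omega> - s * Z2 \<omega>))"
    and "0 < s"
    and fZ12: "distributed M (lborel \<Otimes>\<^sub>M lborel) (\<lambda>\<omega>. (Z1 \<omega>, Z2 \<omega>)) (\<lambda>(z, w). ennreal (fZ12 z w))"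
    and fZ12_nonneg: "\<And>z w. 0 \<le> fZ12 z w"
  shows "emeasure M {\<omega> \<in> space M. Y \<omega> \<in> B \<and> 0 < U \<omega>}
       = (\<integral>\<^sup>+z. indicator B (m1 + \<sigma> * z)
            * (\<integral>\<^sup>+w. ennreal (fZ12 z w) * indicator {..m2 / s + \<rho> / s * z} w \<partial>lborel) \<partial>lborel)"
proof -
  define a where "a z = m2 / s + \<rho> / s * z" for z
  have "(\<lambda>\<omega>. (Z1 \<omega>, Z2 \<omega>)) \<in> measurable M (lborel \<Otimes>\<^sub>M lborel)"
    using fZ12 by (simp add: distributed_def)
  then have [measurable]: "Z1 \<in> borel_measurable M" "Z2 \<in> borel_measurable M"
    by (simp_all add: measurable_pair_iff comp_def)
  have [measurable]: "case_prod fZ12 \<in> borel_measurable (lborel \<Otimes>\<^sub>M lborel)"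
    using distributed_real_measurable[of _ "case_prod fZ12"] fZ12 fZ12_nonneg by (auto simp: split_beta')
  define \<Phi> :: "real \<times> real \<Rightarrow> ennreal"
    where "\<Phi> p = indicator (B \<times> {0<..}) (m1 + \<sigma> * fst p, m2 + \<rho> * fst p - s * snd p)"
    for p :: "real \<times> real"
  have [measurable]: "\<Phi> \<in> borel_measurable (lborel \<Otimes>\<^sub>M lborel)"
    unfolding \<Phi>_def by measurable
  have below: "s * w < m2 + \<rho> * z \<longleftrightarrow> w < a z" for z w
    using \<open>0 < s\<close> by (auto simp: a_def field_simps)
  have "emeasure M {\<omega> \<in> space M. Y \<omega> \<in> B \<and> 0 < U \<omega>}
      = emeasure (distr M (lborel \<Otimes>\<^sub>M lborel) (\<lambda>\<omega>. (Y \<omega>, U \<omega>))) (B \<times> {0<..})"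
    by (subst emeasure_distr) (auto intro!: arg_cong[where f = "emeasure M"])
  also have "\<dots> = (\<integral>\<^sup>+q. indicator (B \<times> {0<..}) q
      \<partial>distr M (lborel \<Otimes>\<^sub>M lborel) (\<lambda>\<omega>. (m1 + \<sigma> * Z1 \<omega>, m2 + \<rho> * Z1 \<omega> - s * Z2 \<omega>)))"
    unfolding law by (rule nn_integral_indicator[symmetric]) measurable
  also have "\<dots> = (\<integral>\<^sup>+\<omega>. indicator (B \<times> {0<..}) (m1 + \<sigma> * Z1 \<omega>, m2 + \<rho> * Z1 \<omega> - s * Z2 \<omega>) \<partial>M)"
    by (rule nn_integral_distr) measurable
  also have "\<dots> = (\<integral>\<^sup>+\<omega>. \<Phi> (Z1 \<omega>, Z2 \<omega>) \<partial>M)"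
    by (simp add: \<Phi>_def)
  also have "\<dots> = (\<integral>\<^sup>+p. (\<lambda>(z, w). ennreal (fZ12 z w)) p * \<Phi> p \<partial>(lborel \<Otimes>\<^sub>M lborel))"
    by (rule distributed_nn_integral[OF fZ12, symmetric]) measurable
  also have "\<dots> = (\<integral>\<^sup>+z. \<integral>\<^sup>+w. ennreal (fZ12 z w)
      * indicator (B \<times> {0<..}) (m1 + \<sigma> * z, m2 + \<rho> * z - s * w) \<partial>lborel \<partial>lborel)"
    unfolding \<Phi>_def by (subst lborel.nn_integral_fst[symmetric]) (simp_all, measurable)
  also have "\<dots> = (\<integral>\<^sup>+z. indicator B (m1 + \<sigma> * z)
      * (\<integral>\<^sup>+w. ennreal (fZ12 z w) * indicator {..a z} w \<partial>lborel) \<partial>lborel)"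
  proof (intro nn_integral_cong)
    fix z :: real
    have "AE w in lborel. ennreal (fZ12 z w) * indicator (B \<times> {0<..}) (m1 + \<sigma> * z, m2 + \<rho> * z - s * w)
        = indicator B (m1 + \<sigma> * z) * (ennreal (fZ12 z w) * indicator {..a z} w)"
      using AE_lborel_singleton[of "a z"]
      by eventually_elim (auto simp: below split: split_indicator)
    then show "(\<integral>\<^sup>+w. ennreal (fZ12 z w)
        * indicator (B \<times> {0<..}) (m1 + \<sigma> * z, m2 + \<rho> * z - s * w) \<partial>lborel)
      = indicator B (m1 + \<sigma> * z) * (\<integral>\<^sup>+w. ennreal (fZ12 z w) * indicator {..a z} w \<partial>lborel)"
      by (subst nn_integral_cmult[symmetric]) (measurable, rule nn_integral_cong_AE)
  qed
  finally show ?thesis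
    unfolding a_def .
qed

lemma emeasure_selection:
  fixes Y U Z1 Z2 :: "'a \<Rightarrow> real" and fZ1 :: "real \<Rightarrow> real" and fZ12 :: "real \<Rightarrow> real \<Rightarrow> real"
  assumes [measurable]: "Y \<in> borel_measurable M" "U \<in> borel_measurable M" "B \<in> sets borel"
    and law: "distr M (lborel \<Otimes>\<^sub>M lborel) (\<lambda>\<omega>. (Y \<omega>, U \<omega>))
      = distr M (lborel \<Otimes>\<^sub>M lborel) (\<lambda>\<omega>. (m1 + \<sigma> * Z1 \<omega>, m2 + \<rho> * Z1 \<omega> - s * Z2 \<omega>))"
    and "0 < s"
    and fZ1: "distributed M lborel Z1 (\<lambda>z. ennreal (fZ1 z))"
    and fZ12: "distributed M (lborel \<Otimes>\<^sub>M lborel) (\<lambda>\<omega>. (Z1 \<omega>, Z2 \<omega>)) (\<lambda>(z, w). ennreal (fZ12 z w))"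
    and fZ12_nonneg: "\<And>z w. 0 \<le> fZ12 z w"
  shows "emeasure M {\<omega> \<in> space M. Y \<omega> \<in> B \<and> 0 < U \<omega>}
       = (\<integral>\<^sup>+z. indicator B (m1 + \<sigma> * z)
            * ennreal (if fZ1 z = 0 then 0 else fZ1 z * Gfun fZ12 fZ1 z (m2 / s + \<rho> / s * z)) \<partial>lborel)"
proof -
  have [measurable]: "case_prod fZ12 \<in> borel_measurable (lborel \<Otimes>\<^sub>M lborel)"
    using distributed_real_measurable[of _ "case_prod fZ12"] fZ12 fZ12_nonneg by (auto simp: split_beta')
  have "AE z in lborel. ennreal (fZ1 z) = (\<integral>\<^sup>+w. ennreal (fZ12 z w) \<partial>lborel)"
    using distributed_marginal_eq_joint1[OF lborel.sigma_finite_measure_axioms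
        lborel.sigma_finite_measure_axioms fZ1 fZ12] by simp
  then have "AE z in lborel. (\<integral>\<^sup>+w. ennreal (fZ12 z w) * indicator {..m2 / s + \<rho> / s * z} w \<partial>lborel)
      = ennreal (if fZ1 z = 0 then 0 else fZ1 z * Gfun fZ12 fZ1 z (m2 / s + \<rho> / s * z))"
  proof eventually_elim
    case (elim z)
    have "fZ12 z \<in> borel_measurable borel"
      by measurable
    with elim show ?case
      using ennreal_mult_Gfun[of fZ12 z fZ1] fZ12_nonneg by simp
  qed
  then show ?thesis
    unfolding emeasure_selection_joint_density[OF assms(1-5) fZ12 fZ12_nonneg]
    by (intro nn_integral_cong_AE) (auto elim!: eventually_mono)
qed

lemma distributed_uniform_measure_affine:
  fixes Y :: "'a \<Rightarrow> real" and k :: "real \<Rightarrow> ennreal"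
  assumes [measurable]: "Y \<in> borel_measurable M" "A \<in> sets M" "k \<in> borel_measurable borel"
    and "0 < \<sigma>"
    and joint: "\<And>B. B \<in> sets borel \<Longrightarrow>
      emeasure M ({\<omega> \<in> space M. Y \<omega> \<in> B} \<inter> A) = (\<integral>\<^sup>+z. indicator B (m + \<sigma> * z) * k z \<partial>lborel)"
  shows "distributed (uniform_measure M A) lborel Y (\<lambda>y. ennreal (1 / \<sigma>) * (k ((y - m) / \<sigma>) / emeasure M A))"
proof (rule distributedI_nn_integral)
  show "Y \<in> measurable (uniform_measure M A) lborel"
    "(\<lambda>y. ennreal (1 / \<sigma>) * (k ((y - m) / \<sigma>) / emeasure M A)) \<in> borel_measurable lborel"
    by measurable
  fix B :: "real set" assume "B \<in> sets lborel"
  then have B[measurable]: "B \<in> sets borel"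
    by simp
  have "(\<integral>\<^sup>+\<omega>. indicator B (Y \<omega>) \<partial>uniform_measure M A)
      = (\<integral>\<^sup>+\<omega>. indicator B (Y \<omega>) * indicator A \<omega> \<partial>M) / emeasure M A"
    by (rule nn_integral_uniform_measure) measurable
  also have "(\<integral>\<^sup>+\<omega>. indicator B (Y \<omega>) * indicator A \<omega> \<partial>M)
      = (\<integral>\<^sup>+\<omega>. indicator ({\<omega> \<in> space M. Y \<omega> \<in> B} \<inter> A) \<omega> \<partial>M)"
    using sets.sets_into_space[OF \<open>A \<in> sets M\<close>]
    by (intro nn_integral_cong) (auto split: split_indicator)
  also have "\<dots> = (\<integral>\<^sup>+z. indicator B (m + \<sigma> * z) * k z \<partial>lborel)"
    by (simp add: joint)
  also have "(\<integral>\<^sup>+z. indicator B (m + \<sigma> * z) * k z \<partial>lborel) / emeasure M A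
      = (\<integral>\<^sup>+z. indicator B (m + \<sigma> * z) * k z / emeasure M A \<partial>lborel)"
    by (rule nn_integral_divide[symmetric]) measurable
  also have "\<dots> = (\<integral>\<^sup>+z. ennreal \<sigma> * (ennreal (1 / \<sigma>) * (k z / emeasure M A) * indicator B (m + \<sigma> * z))
      \<partial>lborel)"
  proof (intro nn_integral_cong)
    fix z :: real
    have "ennreal \<sigma> * (ennreal (1 / \<sigma>) * (k z / emeasure M A) * indicator B (m + \<sigma> * z))
        = (ennreal \<sigma> * ennreal (1 / \<sigma>)) * (k z / emeasure M A * indicator B (m + \<sigma> * z))"
      by (simp only: mult.assoc)
    also have "ennreal \<sigma> * ennreal (1 / \<sigma>) = 1"
      using \<open>0 < \<sigma>\<close> by (simp add: ennreal_mult[symmetric])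
    finally have rhs: "ennreal \<sigma> * (ennreal (1 / \<sigma>) * (k z / emeasure M A) * indicator B (m + \<sigma> * z))
        = k z / emeasure M A * indicator B (m + \<sigma> * z)"
      by simp
    have "indicator B (m + \<sigma> * z) * k z / emeasure M A = k z / emeasure M A * indicator B (m + \<sigma> * z)"
      by (metis ennreal_times_divide mult.commute)
    then show "indicator B (m + \<sigma> * z) * k z / emeasure M A
        = ennreal \<sigma> * (ennreal (1 / \<sigma>) * (k z / emeasure M A) * indicator B (m + \<sigma> * z))"
      by (simp only: rhs)
  qed
  also have "\<dots> = ennreal \<sigma> * (\<integral>\<^sup>+z. ennreal (1 / \<sigma>) * (k z / emeasure M A) * indicator B (m + \<sigma> * z)
      \<partial>lborel)"
    by (rule nn_integral_cmult) measurable
  also have "\<dots> = ennreal \<bar>\<sigma>\<bar> * (\<integral>\<^sup>+z. ennreal (1 / \<sigma>) * (k ((m + \<sigma> * z - m) / \<sigma>) / emeasure M A)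
      * indicator B (m + \<sigma> * z) \<partial>lborel)"
    using \<open>0 < \<sigma>\<close> by simp
  also have "\<dots> = (\<integral>\<^sup>+y. ennreal (1 / \<sigma>) * (k ((y - m) / \<sigma>) / emeasure M A) * indicator B y \<partial>lborel)"
    using \<open>0 < \<sigma>\<close> by (intro nn_integral_real_affine[symmetric]) measurable
  finally show "(\<integral>\<^sup>+\<omega>. indicator B (Y \<omega>) \<partial>uniform_measure M A)
      = (\<integral>\<^sup>+y. ennreal (1 / \<sigma>) * (k ((y - m) / \<sigma>) / emeasure M A) * indicator B y \<partial>lborel)" .
qed

lemma distributed_selection:
  fixes Y U Z1 Z2 :: "'a \<Rightarrow> real" and fZ1 :: "real \<Rightarrow> real" and fZ12 :: "real \<Rightarrow> real \<Rightarrow> real"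
  assumes [measurable]: "Y \<in> borel_measurable M" "U \<in> borel_measurable M"
    and law: "distr M (lborel \<Otimes>\<^sub>M lborel) (\<lambda>\<omega>. (Y \<omega>, U \<omega>))
      = distr M (lborel \<Otimes>\<^sub>M lborel) (\<lambda>\<omega>. (m1 + \<sigma> * Z1 \<omega>, m2 + \<rho> * Z1 \<omega> - s * Z2 \<omega>))"
    and "0 < \<sigma>" "0 < s"
    and fZ1: "distributed M lborel Z1 (\<lambda>z. ennreal (fZ1 z))" and fZ1_nonneg: "\<And>z. 0 \<le> fZ1 z"
    and fZ12: "distributed M (lborel \<Otimes>\<^sub>M lborel) (\<lambda>\<omega>. (Z1 \<omega>, Z2 \<omega>)) (\<lambda>(z, w). ennreal (fZ12 z w))"
    and fZ12_nonneg: "\<And>z w. 0 \<le> fZ12 z w"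
    and pos: "0 < prob {\<omega> \<in> space M. 0 < U \<omega>}"
  shows "distributed (uniform_measure M {\<omega> \<in> space M. 0 < U \<omega>}) lborel Y
      (\<lambda>y. ennreal (if fZ1 ((y - m1) / \<sigma>) = 0 then 0
         else 1 / \<sigma> * fZ1 ((y - m1) / \<sigma>)
           * Gfun fZ12 fZ1 ((y - m1) / \<sigma>) (m2 / s + \<rho> / s * ((y - m1) / \<sigma>))
           / prob {\<omega> \<in> space M. 0 < U \<omega>}))"
    (is "distributed _ _ _ ?h")
proof -
  define A where "A = {\<omega> \<in> space M. 0 < U \<omega>}"
  define c where "c z = (if fZ1 z = 0 then 0 else fZ1 z * Gfun fZ12 fZ1 z (m2 / s + \<rho> / s * z))" for z
  have [measurable]: "A \<in> sets M" "fZ1 \<in> borel_measurable borel"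
    using distributed_real_measurable[OF _ fZ1] fZ1_nonneg by (simp_all add: A_def)
  have "case_prod fZ12 \<in> borel_measurable (lborel \<Otimes>\<^sub>M lborel)"
    using distributed_real_measurable[of _ "case_prod fZ12"] fZ12 fZ12_nonneg by (auto simp: split_beta')
  moreover have "sets (lborel \<Otimes>\<^sub>M lborel) = sets (borel \<Otimes>\<^sub>M (borel :: real measure))"
    by (rule sets_pair_measure_cong) simp_all
  ultimately have [measurable]: "case_prod fZ12 \<in> borel_measurable (borel \<Otimes>\<^sub>M borel)"
    by (simp cong: measurable_cong_sets)
  have indicator_scaleR: "indicator {..t} w *\<^sub>R v = (if w \<le> t then v else 0)" for t w v :: real
    by (simp add: indicator_def)
  have [measurable]: "?h \<in> borel_measurable borel" and [measurable]: "c \<in> borel_measurable borel"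
    unfolding c_def Gfun_def set_lebesgue_integral_def indicator_scaleR by measurable
  have "distributed (uniform_measure M A) lborel Y
      (\<lambda>y. ennreal (1 / \<sigma>) * (ennreal (c ((y - m1) / \<sigma>)) / emeasure M A))"
  proof (rule distributed_uniform_measure_affine[OF _ _ _ \<open>0 < \<sigma>\<close>])
    fix B :: "real set" assume "B \<in> sets borel"
    moreover have "{\<omega> \<in> space M. Y \<omega> \<in> B} \<inter> A = {\<omega> \<in> space M. Y \<omega> \<in> B \<and> 0 < U \<omega>}"
      by (auto simp: A_def)
    ultimately show "emeasure M ({\<omega> \<in> space M. Y \<omega> \<in> B} \<inter> A)
        = (\<integral>\<^sup>+z. indicator B (m1 + \<sigma> * z) * ennreal (c z) \<partial>lborel)"
      unfolding c_def by (simp add: emeasure_selection[OF _ _ _ law \<open>0 < s\<close> fZ1 fZ12 fZ12_nonneg])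
  qed measurable
  moreover have "ennreal (1 / \<sigma>) * (ennreal (c ((y - m1) / \<sigma>)) / emeasure M A) = ?h y" for y
  proof -
    have "0 \<le> c ((y - m1) / \<sigma>)"
      using fZ1_nonneg fZ12_nonneg by (simp add: c_def Gfun_nonneg)
    then have "ennreal (c ((y - m1) / \<sigma>)) / emeasure M A = ennreal (c ((y - m1) / \<sigma>) / prob A)"
      using pos by (simp add: A_def emeasure_eq_measure divide_ennreal)
    then have "ennreal (1 / \<sigma>) * (ennreal (c ((y - m1) / \<sigma>)) / emeasure M A)
        = ennreal (1 / \<sigma>) * ennreal (c ((y - m1) / \<sigma>) / prob A)"
      by simp
    also have "\<dots> = ennreal (1 / \<sigma> * (c ((y - m1) / \<sigma>) / prob A))"
      using \<open>0 < \<sigma>\<close> \<open>0 \<le> c ((y - m1) / \<sigma>)\<close> by (intro ennreal_mult[symmetric]) simp_all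
    also have "\<dots> = ?h y"
      by (intro arg_cong[where f = ennreal]) (simp add: c_def A_def)
    finally show ?thesis .
  qed
  ultimately show ?thesis
    by (simp add: A_def)
qed

end

theorem theorem1:
  fixes M :: "'a measure"
    and g :: "real \<Rightarrow> real"
    and K mu1 mu2 \<sigma> \<rho> :: real
    and Y U V1 V2 R D :: "'a \<Rightarrow> real"
    and fZ1 fS :: "real \<Rightarrow> real"
    and fZ12 :: "real \<Rightarrow> real \<Rightarrow> real"
  assumes P: "prob_space M"
    and g_meas: "set_borel_measurable borel {0..} g"
    and g_nonneg: "\<And>u. u \<ge> 0 \<Longrightarrow> g u \<ge> 0"
    and g_int: "set_integrable lborel {0..} g"
    and K_def: "K = (LINT u:{0..}|lborel. g u)"
    and K_pos: "0 < K"
    and sigma_pos: "\<sigma> > 0"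
    and rho: "-1 < \<rho>" "\<rho> < 1"
    and YU: "distributed M (lborel \<Otimes>\<^sub>M lborel) (\<lambda>\<omega>. (Y \<omega>, U \<omega>))
               (\<lambda>(y, u). ennreal (biv_sym_density g K mu1 mu2 \<sigma> \<rho> y u))"
    and indep: "prob_space.indep_vars M (\<lambda>_. borel) (\<lambda>i. [V1, V2, R, D] ! i) {..<4}"
    and V1: "measure M {\<omega> \<in> space M. V1 \<omega> = -1} = 1/2" "measure M {\<omega> \<in> space M. V1 \<omega> = 1} = 1/2"
    and V2: "measure M {\<omega> \<in> space M. V2 \<omega> = -1} = 1/2" "measure M {\<omega> \<in> space M. V2 \<omega> = 1} = 1/2"
    and Ddist: "distributed M lborel D
               (\<lambda>d. ennreal (indicator {0<..<1} d * (2 / (pi * sqrt (1 - d^2)))))"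
    and Rdist: "distributed M lborel R
               (\<lambda>r. ennreal (indicator {0<..} r * (2 * r * g (r^2) / K)))"
    and fZ1_nonneg: "\<And>z. fZ1 z \<ge> 0"
    and fZ1: "distributed M lborel (\<lambda>\<omega>. R \<omega> * D \<omega> * V1 \<omega>) (\<lambda>z. ennreal (fZ1 z))"
    and fZ12_nonneg: "\<And>z w. fZ12 z w \<ge> 0"
    and fZ12: "distributed M (lborel \<Otimes>\<^sub>M lborel)
               (\<lambda>\<omega>. (R \<omega> * D \<omega> * V1 \<omega>, R \<omega> * sqrt (1 - (D \<omega>)^2) * V2 \<omega>))
               (\<lambda>(z, w). ennreal (fZ12 z w))"
    and fS_nonneg: "\<And>s. fS s \<ge> 0"
    and fS: "distributed M lborel
               (\<lambda>\<omega>. \<rho> * (R \<omega> * D \<omega> * V1 \<omega>) + sqrt (1 - \<rho>^2) * (R \<omega> * sqrt (1 - (D \<omega>)^2) * V2 \<omega>))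
               (\<lambda>s. ennreal (fS s))"
  shows "measure M {\<omega> \<in> space M. U \<omega> > 0} = Hfun fS mu2
    \<and> (measure M {\<omega> \<in> space M. U \<omega> > 0} > 0 \<longrightarrow>
        distributed (uniform_measure M {\<omega> \<in> space M. U \<omega> > 0}) lborel Y
          (\<lambda>y. ennreal
             (if fZ1 ((y - mu1) / \<sigma>) = 0 then 0
              else 1 / \<sigma> * fZ1 ((y - mu1) / \<sigma>)
                   * Gfun fZ12 fZ1 ((y - mu1) / \<sigma>)
                       (mu2 / sqrt (1 - \<rho>^2) + \<rho> / sqrt (1 - \<rho>^2) * ((y - mu1) / \<sigma>))
                   / Hfun fS mu2)))"
proof -
  interpret prob_space M
    by (rule P)
  note law = biv_sym_stochastic_representation[OF g_meas g_nonneg K_pos sigma_pos rho YU indep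
      V1 V2 Ddist Rdist]
  note [measurable] = indep_vars_list4D(1-4)[OF indep]
  have [measurable]: "Y \<in> borel_measurable M" "U \<in> borel_measurable M"
    using distributed_measurable[OF YU] by (simp_all add: measurable_pair_iff comp_def)
  have prob_pos: "prob {\<omega> \<in> space M. U \<omega> > 0} = Hfun fS mu2"
  proof (rule prob_pos_eq_Hfun[OF _ _ fS fS_nonneg])
    show "distr M lborel U = distr M lborel (\<lambda>\<omega>. mu2 + (\<rho> * (R \<omega> * D \<omega> * V1 \<omega>)
        + sqrt (1 - \<rho>\<^sup>2) * (R \<omega> * sqrt (1 - (D \<omega>)\<^sup>2) * V2 \<omega>)))"
      using distr_cong_compose[OF law(1) _ _ measurable_snd] by (simp add: add.assoc)
  qed measurable
  have "0 < sqrt (1 - \<rho>\<^sup>2)"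
    using rho by (simp add: abs_square_less_1)
  from distributed_selection[OF _ _ law(2) sigma_pos this fZ1 fZ1_nonneg fZ12 fZ12_nonneg]
  show ?thesis
    unfolding prob_pos by simp
qed

end
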